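(* Let $\alpha,\beta\vdash n$ and define integers $b^\mu_{\alpha,\beta}$ by $\mathbf{C}_\alpha(\mathbf{z})\star\mathbf{C}_\beta(\mathbf{z})=\sum_{\mu\vdash n}b^\mu_{\alpha,\beta}\mathbf{C}_\mu(\mathbf{z})$. For a finite set $U$ of size $n$ let $\mathbf{C}^\mu_{\alpha,\beta}[U]=\{(s,t)\in\mathbf{C}_\alpha[U]\times\mathbf{C}_\beta[U]:\mathrm{Aut}(s)\cap\mathrm{Aut}(t)\simeq\langle\sigma_\mu\rangle\}$, where $\mathrm{Aut}(s)\le S_U$ is the stabiliser of $s$ and $\simeq$ means equal to $f\langle\sigma_\mu\rangle f^{-1}$ for some bijection $f:[n]\to U$. Then $\mathbf{C}^\mu_{\alpha,\beta}$ is a subspecies of $\mathbf{C}_\alpha\times\mathbf{C}_\beta$, and $b^\mu_{\alpha,\beta}$ equals the number of isomorphism types (unlabelled structures) of $\mathbf{C}^\mu_{\alpha,\beta}$, i.e. the number of orbits of $S_n$ on $\mathbf{C}^\mu_{\alpha,\beta}[[n]]$.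
   Context: For $H\le S_n$, $(X^n/H)[U]=\{\lambda H:\lambda:[n]\to U\text{ bijection}\}$, with $S_U$ acting by left composition. $\sigma_\alpha$ is the standard permutation of cycle type $\alpha$ (cycles filled with $1,\ldots,n$ in increasing order), $\mathbf{C}_\alpha=X^n/\langle\sigma_\alpha\rangle$, and $\mathbf{C}_\alpha(\mathbf{z})=\frac{1}{o(\sigma_\alpha)}\sum_{g\in\langle\sigma_\alpha\rangle}p_{\lambda(g)}$ is its cycle index series ($\lambda(g)$ the cycle type, $p_\nu$ power sums); $\{\mathbf{C}_\mu(\mathbf{z})\}_{\mu\vdash n}$ is a basis of $\Lambda_n\otimes\mathbb{Q}$. The Kronecker product $\star$ on $\Lambda_n$ is the bilinear product with $p_\lambda\star p_\nu=\delta_{\lambda\nu}z_\lambda p_\lambda$, $z_\lambda=\prod_i i^{m_i}m_i!$ ($m_i$ the multiplicity of $i$ in $\lambda$); it is the cycle index of the Cartesian product $(F\times G)[U]=F[U]\times G[U]$. *)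

theory Defs
  imports Complex_Main "HOL-Library.Multiset" "HOL-Library.FuncSet" "HOL-Combinatorics.Permutations"
begin

definition partitions :: "nat \<Rightarrow> nat multiset set" where
  "partitions n = {\<mu>. 0 \<notin># \<mu> \<and> sum_mset \<mu> = n}"

text \<open>Standard permutation: cycles of lengths given by the parts (taken in weakly
decreasing order), filled consecutively with 1,...,n in increasing order.\<close>
fun stdp :: "nat \<Rightarrow> nat list \<Rightarrow> nat \<Rightarrow> nat" where
  "stdp off [] i = i"
| "stdp off (a # as) i =
     (if off < i \<and> i \<le> off + a then (if i = off + a then off + 1 else i + 1)
      else stdp (off + a) as i)"

definition sigma :: "nat multiset \<Rightarrow> nat \<Rightarrow> nat" where
  "sigma \<alpha> = stdp 0 (rev (sorted_list_of_multiset \<alpha>))"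

definition cgroup :: "nat multiset \<Rightarrow> (nat \<Rightarrow> nat) set" where
  "cgroup \<alpha> = {(sigma \<alpha>) ^^ k | k. True}"

definition porbit :: "(nat \<Rightarrow> nat) \<Rightarrow> nat \<Rightarrow> nat set" where
  "porbit g x = {(g ^^ k) x | k. True}"

definition cycle_type :: "nat \<Rightarrow> (nat \<Rightarrow> nat) \<Rightarrow> nat multiset" where
  "cycle_type n g = image_mset card (mset_set (porbit g ` {1..n}))"

text \<open>An element of Lambda_n (x) Q is represented by its coefficient function
\<open>\<nu> \<mapsto> [p_\<nu>]\<close> on partitions (supported on partitions of n).\<close>
type_synonym symf = "nat multiset \<Rightarrow> rat"

definition zee :: "nat multiset \<Rightarrow> nat" where
  "zee lam = (\<Prod>i\<in>set_mset lam. i ^ count lam i * fact (count lam i))"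

definition kron :: "symf \<Rightarrow> symf \<Rightarrow> symf" where
  "kron f g = (\<lambda>\<nu>. of_nat (zee \<nu>) * f \<nu> * g \<nu>)"

text \<open>Cycle index series C_alpha(z) = (1/o(sigma_alpha)) sum_{g in <sigma_alpha>} p_{lambda(g)}.\<close>
definition Cser :: "nat multiset \<Rightarrow> symf" where
  "Cser \<alpha> = (\<lambda>\<nu>. of_nat (card {g \<in> cgroup \<alpha>. cycle_type (sum_mset \<alpha>) g = \<nu>})
                    / of_nat (card (cgroup \<alpha>)))"

definition bijs :: "nat \<Rightarrow> 'a set \<Rightarrow> (nat \<Rightarrow> 'a) set" where
  "bijs n U = {l. bij_betw l {1..n} U \<and> l \<in> extensional {1..n}}"

definition coset :: "(nat \<Rightarrow> 'a) \<Rightarrow> (nat \<Rightarrow> nat) set \<Rightarrow> (nat \<Rightarrow> 'a) set" where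
  "coset l H = (\<lambda>h. l \<circ> h) ` H"

definition Xquot :: "nat \<Rightarrow> (nat \<Rightarrow> nat) set \<Rightarrow> 'a set \<Rightarrow> (nat \<Rightarrow> 'a) set set" where
  "Xquot n H U = {coset l H | l. l \<in> bijs n U}"

definition Cspec :: "nat multiset \<Rightarrow> 'a set \<Rightarrow> (nat \<Rightarrow> 'a) set set" where
  "Cspec \<alpha> U = Xquot (sum_mset \<alpha>) (cgroup \<alpha>) U"

definition act :: "nat \<Rightarrow> ('a \<Rightarrow> 'b) \<Rightarrow> (nat \<Rightarrow> 'a) set \<Rightarrow> (nat \<Rightarrow> 'b) set" where
  "act n \<tau> s = (\<lambda>l. restrict (\<tau> \<circ> l) {1..n}) ` s"

definition Aut :: "nat \<Rightarrow> 'a set \<Rightarrow> (nat \<Rightarrow> 'a) set \<Rightarrow> ('a \<Rightarrow> 'a) set" where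
  "Aut n U s = {\<tau>. \<tau> permutes U \<and> act n \<tau> s = s}"

definition conjg :: "nat \<Rightarrow> 'a set \<Rightarrow> (nat \<Rightarrow> 'a) \<Rightarrow> (nat \<Rightarrow> nat) \<Rightarrow> ('a \<Rightarrow> 'a)" where
  "conjg n U f g = (\<lambda>x. if x \<in> U then f (g (inv_into {1..n} f x)) else x)"

definition iso_sub :: "nat \<Rightarrow> 'a set \<Rightarrow> ('a \<Rightarrow> 'a) set \<Rightarrow> (nat \<Rightarrow> nat) set \<Rightarrow> bool" where
  "iso_sub n U A H = (\<exists>f. bij_betw f {1..n} U \<and> A = conjg n U f ` H)"

definition Cmu :: "nat multiset \<Rightarrow> nat multiset \<Rightarrow> nat multiset \<Rightarrow> 'a set
                   \<Rightarrow> ((nat \<Rightarrow> 'a) set \<times> (nat \<Rightarrow> 'a) set) set" where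
  "Cmu \<alpha> \<beta> \<mu> U = {(s, t). s \<in> Cspec \<alpha> U \<and> t \<in> Cspec \<beta> U \<and>
       iso_sub (sum_mset \<alpha>) U (Aut (sum_mset \<alpha>) U s \<inter> Aut (sum_mset \<alpha>) U t) (cgroup \<mu>)}"

definition num_types :: "nat multiset \<Rightarrow> nat multiset \<Rightarrow> nat multiset \<Rightarrow> nat" where
  "num_types \<alpha> \<beta> \<mu> = (let n = sum_mset \<alpha> in
     card ((\<lambda>(s, t). {(act n \<pi> s, act n \<pi> t) | \<pi>. \<pi> permutes {1..n}}) ` Cmu \<alpha> \<beta> \<mu> {1..n}))"

end

(*
  For a permutation sigma of cycle type nu, the coefficient of p_nu in the cycle index of a
  species F is the number of F-structures on [n] fixed by sigma, divided by z_nu.  The structures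
  of C_gamma = X^n/<sigma_gamma> on [n] form a single S_n-orbit with stabiliser <sigma_gamma>;
  counting the permutations that conjugate sigma into this stabiliser recovers the defining
  formula of C_gamma(z).  Fixed points of a product are pairs of fixed points, so the Kronecker
  product is the cycle index of C_alpha x C_beta.  The stabiliser of a pair (s, t) is a subgroup
  of the cyclic group Aut(s), hence cyclic and conjugate to <sigma_mu> with mu its cycle type:
  every orbit of pairs is a copy of C_mu for exactly one mu, and counting fixed points orbit by
  orbit gives the expansion.  The coefficients are unique because the matrix ([p_nu] C_mu) is
  triangular: a power of sigma_mu has at least as many cycles as sigma_mu, and exactly as many
  only if it has cycle type mu.
*)

theory Submission
  imports Defs "HOL-Combinatorics.Cycles"
begin

lemma porbit_eq_range: "porbit g x = range (\<lambda>k. (g ^^ k) x)"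
  unfolding porbit_def by auto

lemma porbit_self [simp]: "x \<in> porbit g x"
  unfolding porbit_eq_range by (metis funpow_0 rangeI)

lemma porbit_eq_support: "permutation p \<Longrightarrow> porbit p x = set (support p x)"
  unfolding porbit_eq_range by (rule support_set[symmetric])

lemma card_porbit: "permutation p \<Longrightarrow> card (porbit p x) = least_power p x"
  using distinct_card[OF cycle_of_permutation] by (simp add: porbit_eq_support)

lemma finite_porbit: "permutation p \<Longrightarrow> finite (porbit p x)"
  by (simp add: porbit_eq_support)

lemma porbit_eq:
  assumes "permutation p" "y \<in> porbit p x"
  shows "porbit p y = porbit p x"
  using disjoint_support[OF assms(1)] porbit_self[of y p] assms(2)
  unfolding porbit_eq_support[OF assms(1)] disjoint_def by blast

lemma disjoint_porbits: "permutation p \<Longrightarrow> disjoint (porbit p ` A)"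
  unfolding disjoint_def using porbit_eq by blast

lemma porbit_subset:
  assumes "g ` A \<subseteq> A" "x \<in> A"
  shows "porbit g x \<subseteq> A"
proof -
  have "(g ^^ k) x \<in> A" for k by (induction k) (use assms in auto)
  thus ?thesis unfolding porbit_eq_range by auto
qed

lemma image_porbit:
  assumes "permutation p"
  shows "p ` porbit p x = porbit p x"
proof -
  have "p ` porbit p x = porbit p (p x)"
    unfolding porbit_eq_range image_image by (simp add: funpow_swap1)
  also have "\<dots> = porbit p x"
    by (rule porbit_eq[OF assms]) (auto simp: porbit_eq_range intro: range_eqI[of _ _ 1])
  finally show ?thesis .
qed

lemma funpow_eq_iff_mod_least_power:
  assumes "permutation p"
  shows "(p ^^ i) x = (p ^^ j) x \<longleftrightarrow> i mod least_power p x = j mod least_power p x"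
proof -
  have *: "(p ^^ i) x = (p ^^ j) x \<longleftrightarrow> i mod least_power p x = j mod least_power p x"
    if "i \<le> j" for i j
  proof -
    have "(p ^^ i) x = (p ^^ j) x \<longleftrightarrow> (p ^^ (j - i)) x = x"
    proof
      assume "(p ^^ i) x = (p ^^ j) x"
      thus "(p ^^ (j - i)) x = x"
        using funpow_diff[OF bij_is_inj[OF permutation_bijective[OF assms]] that] by blast
    next
      assume "(p ^^ (j - i)) x = x"
      hence "(p ^^ i) ((p ^^ (j - i)) x) = (p ^^ i) x" by simp
      thus "(p ^^ i) x = (p ^^ j) x" using that by (metis funpow_add le_add_diff_inverse comp_apply)
    qed
    also have "\<dots> \<longleftrightarrow> least_power p x dvd j - i" using least_power_dvd[OF assms] by simp
    also have "\<dots> \<longleftrightarrow> i mod least_power p x = j mod least_power p x"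
      using mod_eq_dvd_iff_nat[OF that, of "least_power p x"] by auto
    finally show ?thesis .
  qed
  show ?thesis using *[of i j] *[of j i] by (cases "i \<le> j") auto
qed

definition cycle_type_on :: "nat set \<Rightarrow> (nat \<Rightarrow> nat) \<Rightarrow> nat multiset" where
  "cycle_type_on A g = image_mset card (mset_set (porbit g ` A))"

lemma cycle_type_eq_on: "cycle_type n g = cycle_type_on {1..n} g"
  unfolding cycle_type_def cycle_type_on_def ..

lemma cycle_type_on_empty [simp]: "cycle_type_on {} g = {#}"
  unfolding cycle_type_on_def by simp

lemma cycle_type_on_eq_empty_iff: "finite A \<Longrightarrow> cycle_type_on A g = {#} \<longleftrightarrow> A = {}"
  unfolding cycle_type_on_def by (simp add: mset_set_empty_iff)

lemma size_cycle_type_on: "size (cycle_type_on A g) = card (porbit g ` A)"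
  unfolding cycle_type_on_def by simp

lemma cycle_type_on_remove_cycle:
  assumes "permutation g" "finite A" "x \<in> A"
  shows "cycle_type_on A g = add_mset (least_power g x) (cycle_type_on (A - porbit g x) g)"
proof -
  let ?C = "porbit g x"
  have "porbit g ` A = insert ?C (porbit g ` (A - ?C))"
    using porbit_eq[OF assms(1)] assms(3) by blast
  moreover have "?C \<notin> porbit g ` (A - ?C)"
    using porbit_self by blast
  ultimately show ?thesis
    unfolding cycle_type_on_def using card_porbit[OF assms(1)] assms(2) by simp
qed

lemma image_diff_porbit:
  assumes "permutation g" "g ` A = A"
  shows "g ` (A - porbit g x) = A - porbit g x"
  using image_set_diff[OF bij_is_inj[OF permutation_bijective[OF assms(1)]]]
    image_porbit[OF assms(1)] assms(2) by simp

lemma card_points_of_period: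
  assumes "permutation s" "finite B" "s ` B \<subseteq> B"
  shows "card {b \<in> B. least_power s b = L} = L * count (cycle_type_on B s) L"
proof -
  let ?O = "{Q \<in> porbit s ` B. card Q = L}"
  have "{b \<in> B. least_power s b = L} = \<Union> ?O"
  proof (intro equalityI subsetI)
    fix b assume "b \<in> {b \<in> B. least_power s b = L}"
    thus "b \<in> \<Union> ?O" using card_porbit[OF assms(1), of b] porbit_self[of b s] by blast
  next
    fix b assume "b \<in> \<Union> ?O"
    then obtain y where y: "y \<in> B" "b \<in> porbit s y" "card (porbit s y) = L" by blast
    have "least_power s b = L"
      using y(3) porbit_eq[OF assms(1) y(2)] card_porbit[OF assms(1)] by metis
    moreover have "b \<in> B" using porbit_subset[OF assms(3) y(1)] y(2) by blast
    ultimately show "b \<in> {b \<in> B. least_power s b = L}" by blast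
  qed
  moreover have "card (\<Union> ?O) = L * card ?O"
    using disjoint_porbits[OF assms(1), of B] finite_porbit[OF assms(1)]
    by (subst card_Union_disjoint) (auto intro: pairwise_subset)
  moreover have "count (cycle_type_on B s) L = card ?O"
    unfolding cycle_type_on_def using assms(2) by (simp add: count_image_mset_eq_card_vimage)
  ultimately show ?thesis by simp
qed

lemma sum_mset_cycle_type_on:
  assumes "permutation g" "finite A" "g ` A \<subseteq> A"
  shows "sum_mset (cycle_type_on A g) = card A"
proof -
  have "sum_mset (cycle_type_on A g) = sum card (porbit g ` A)"
    unfolding cycle_type_on_def by (simp add: sum_unfold_sum_mset)
  also have "\<dots> = card (\<Union> (porbit g ` A))"
    by (rule card_Union_disjoint[symmetric])
       (use disjoint_porbits[OF assms(1)] finite_porbit[OF assms(1)] in auto)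
  also have "\<Union> (porbit g ` A) = A"
    using porbit_subset[OF assms(3)] porbit_self by blast
  finally show ?thesis .
qed

lemma cycle_type_in_partitions:
  assumes "g permutes {1..n}"
  shows "cycle_type n g \<in> partitions n"
proof -
  have g: "permutation g" using permutes_imp_permutation[OF _ assms] by simp
  have "0 \<notin># cycle_type n g"
  proof
    assume "0 \<in># cycle_type n g"
    then obtain x where "card (porbit g x) = 0" unfolding cycle_type_def by auto
    thus False using finite_porbit[OF g, of x] porbit_self[of x g] by auto
  qed
  moreover have "sum_mset (cycle_type n g) = n"
    unfolding cycle_type_eq_on
    using sum_mset_cycle_type_on[OF g] permutes_image[OF assms] by simp
  ultimately show ?thesis unfolding partitions_def by simp
qed

lemma member_le_sum_mset: "(x :: nat) \<in># M \<Longrightarrow> x \<le> sum_mset M"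
  by (metis le_add1 multi_member_split sum_mset.add_mset)

lemma size_le_sum_mset: "0 \<notin># M \<Longrightarrow> size M \<le> sum_mset (M :: nat multiset)"
  by (induction M) (auto simp: Suc_le_eq)

lemma finite_partitions: "finite (partitions n)"
proof (rule finite_subset)
  show "partitions n \<subseteq> (\<Union>k\<le>n. multisets_of_size {0..n} k)"
    using member_le_sum_mset size_le_sum_mset
    by (fastforce simp: partitions_def multisets_of_size_def)
qed (auto intro: finite_multisets_of_size)

lemma zee_pos: "0 \<notin># M \<Longrightarrow> zee M > 0"
  unfolding zee_def by (rule prod_pos) (auto intro: gr0I)

lemma zee_cycle_type_pos: "\<sigma> permutes {1..n} \<Longrightarrow> zee (cycle_type n \<sigma>) > 0"
  using cycle_type_in_partitions zee_pos unfolding partitions_def by blast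

lemma zee_add_mset: "zee (add_mset L M) = L * (count M L + 1) * zee M"
proof -
  let ?F = "\<lambda>N i. i ^ count N i * fact (count N i) :: nat"
  have "zee (add_mset L M) = ?F (add_mset L M) L * (\<Prod>i\<in>set_mset M - {L}. ?F (add_mset L M) i)"
    unfolding zee_def by (simp add: prod.insert_remove)
  also have "(\<Prod>i\<in>set_mset M - {L}. ?F (add_mset L M) i) = (\<Prod>i\<in>set_mset M - {L}. ?F M i)"
    by (intro prod.cong) auto
  also have "?F (add_mset L M) L = L * (count M L + 1) * ?F M L"
    by (simp add: fact_Suc algebra_simps)
  finally have "zee (add_mset L M) = L * (count M L + 1) * (?F M L * (\<Prod>i\<in>set_mset M - {L}. ?F M i))"
    by (simp only: mult.assoc)
  also have "?F M L * (\<Prod>i\<in>set_mset M - {L}. ?F M i) = zee M"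
    unfolding zee_def by (cases "L \<in># M") (simp_all add: prod.remove not_in_iff)
  finally show ?thesis .
qed

lemma zee_remove_part:
  assumes "permutation s" "finite B" "s ` B = B" "cycle_type_on B s = add_mset L M"
  shows "card {b \<in> B. least_power s b = L} * zee M = zee (cycle_type_on B s)"
  using card_points_of_period[OF assms(1,2), of L] assms(3,4) by (simp add: zee_add_mset)

text \<open>Fixing the maps outside \<open>A\<close> makes the set finite.\<close>

definition conjugators :: "nat set \<Rightarrow> nat set \<Rightarrow> (nat \<Rightarrow> nat) \<Rightarrow> (nat \<Rightarrow> nat) \<Rightarrow> (nat \<Rightarrow> nat) set"
  where "conjugators A B g s =
    {f. bij_betw f A B \<and> (\<forall>x\<in>A. f (g x) = s (f x)) \<and> (\<forall>x. x \<notin> A \<longrightarrow> f x = x)}"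

lemma finite_conjugators:
  assumes "finite A" "finite B"
  shows "finite (conjugators A B g s)"
proof -
  have "conjugators A B g s \<subseteq> (\<lambda>h x. if x \<in> A then h x else x) ` (A \<rightarrow>\<^sub>E B)"
  proof
    fix f assume f: "f \<in> conjugators A B g s"
    hence "f = (\<lambda>x. if x \<in> A then restrict f A x else x)" unfolding conjugators_def by auto
    moreover have "restrict f A \<in> A \<rightarrow>\<^sub>E B" using f unfolding conjugators_def bij_betw_def by auto
    ultimately show "f \<in> (\<lambda>h x. if x \<in> A then h x else x) ` (A \<rightarrow>\<^sub>E B)" by blast
  qed
  thus ?thesis by (rule finite_subset) (intro finite_imageI finite_PiE assms)
qed

lemma conjugator_funpow:
  assumes "g ` A \<subseteq> A" "\<forall>x\<in>A. f (g x) = s (f x)" "x \<in> A"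
  shows "f ((g ^^ k) x) = (s ^^ k) (f x)"
proof -
  have "(g ^^ k) x \<in> A" for k by (induction k) (use assms in auto)
  thus ?thesis using assms(2,3) by (induction k) auto
qed

lemma conjugator_restrict:
  assumes g: "permutation g" "g ` A = A" and s: "permutation s"
    and f: "f \<in> conjugators A B g s" and a: "a \<in> A"
  shows "least_power s (f a) = least_power g a"
    "(\<lambda>x. if x \<in> porbit g a then x else f x) \<in> conjugators (A - porbit g a) (B - porbit s (f a)) g s"
proof -
  let ?C = "porbit g a" and ?f' = "\<lambda>x. if x \<in> porbit g a then x else f x"
  have cf: "\<forall>x\<in>A. f (g x) = s (f x)" and bf: "bij_betw f A B" and of: "\<forall>x. x \<notin> A \<longrightarrow> f x = x"
    using f unfolding conjugators_def by auto
  have CA: "?C \<subseteq> A" using porbit_subset[OF _ a] g(2) by simp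
  have orb: "porbit s (f a) = f ` ?C"
    unfolding porbit_eq_range using conjugator_funpow[of g A f s a] cf a g(2)
    by (auto simp: image_image)
  have injA: "inj_on f A" using bf by (simp add: bij_betw_def)
  show "least_power s (f a) = least_power g a"
    using card_porbit[OF s] card_porbit[OF g(1)] orb card_image[OF inj_on_subset[OF injA CA]]
    by metis
  have "f ` (A - ?C) = B - f ` ?C"
    using inj_on_image_set_diff[OF injA _ CA] bf by (simp add: bij_betw_def)
  hence "bij_betw f (A - ?C) (B - f ` ?C)"
    using injA by (simp add: bij_betw_def inj_on_diff)
  hence "bij_betw ?f' (A - ?C) (B - f ` ?C)"
    by (rule bij_betw_cong[THEN iffD1, rotated]) auto
  moreover have "?f' (g x) = s (?f' x)" if "x \<in> A - ?C" for x
    using that cf image_diff_porbit[OF g, of a] by auto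
  moreover have "?f' x = x" if "x \<notin> A - ?C" for x using that of by auto
  ultimately show "?f' \<in> conjugators (A - ?C) (B - porbit s (f a)) g s"
    unfolding conjugators_def orb by blast
qed

definition cycle_map :: "(nat \<Rightarrow> nat) \<Rightarrow> (nat \<Rightarrow> nat) \<Rightarrow> nat \<Rightarrow> nat \<Rightarrow> nat \<Rightarrow> nat" where
  "cycle_map g s a b x = (s ^^ (LEAST k. (g ^^ k) a = x)) b"

lemma cycle_map_funpow:
  assumes "permutation g" "permutation s" "least_power s b = least_power g a"
  shows "cycle_map g s a b ((g ^^ k) a) = (s ^^ k) b"
proof -
  let ?d = "LEAST j. (g ^^ j) a = (g ^^ k) a"
  have "(g ^^ ?d) a = (g ^^ k) a" by (rule LeastI) (rule refl)
  hence "(s ^^ ?d) b = (s ^^ k) b"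
    using funpow_eq_iff_mod_least_power[OF assms(1)] funpow_eq_iff_mod_least_power[OF assms(2)]
      assms(3) by simp
  thus ?thesis unfolding cycle_map_def .
qed

lemma bij_betw_cycle_map:
  assumes "permutation g" "permutation s" "least_power s b = least_power g a"
  shows "bij_betw (cycle_map g s a b) (porbit g a) (porbit s b)"
proof (rule bij_betw_imageI)
  show "inj_on (cycle_map g s a b) (porbit g a)"
  proof (rule inj_onI)
    fix x y assume "x \<in> porbit g a" "y \<in> porbit g a" and eq: "cycle_map g s a b x = cycle_map g s a b y"
    then obtain i j where ij: "x = (g ^^ i) a" "y = (g ^^ j) a" by (auto simp: porbit_eq_range)
    hence "(s ^^ i) b = (s ^^ j) b" using eq cycle_map_funpow[OF assms] by simp
    thus "x = y"
      using ij funpow_eq_iff_mod_least_power[OF assms(1)] funpow_eq_iff_mod_least_power[OF assms(2)]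
        assms(3) by simp
  qed
  show "cycle_map g s a b ` porbit g a = porbit s b"
    unfolding porbit_eq_range image_image cycle_map_funpow[OF assms] ..
qed

lemma conjugator_extend:
  assumes g: "permutation g" "g ` A = A" and s: "permutation s" "s ` B = B"
    and a: "a \<in> A" and b: "b \<in> B" "least_power s b = least_power g a"
    and f': "f' \<in> conjugators (A - porbit g a) (B - porbit s b) g s"
  shows "(\<lambda>x. if x \<in> porbit g a then cycle_map g s a b x else f' x) \<in> conjugators A B g s"
proof -
  let ?C = "porbit g a" and ?D = "porbit s b"
  define f where "f x = (if x \<in> ?C then cycle_map g s a b x else f' x)" for x
  have bf': "bij_betw f' (A - ?C) (B - ?D)" and cf': "\<forall>x\<in>A - ?C. f' (g x) = s (f' x)"
    and of': "\<forall>x. x \<notin> A - ?C \<longrightarrow> f' x = x"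
    using f' unfolding conjugators_def by auto
  have "bij_betw f ?C ?D"
    using bij_betw_cycle_map[OF g(1) s(1) b(2)] by (rule bij_betw_cong[THEN iffD1, rotated]) (simp add: f_def)
  moreover have "bij_betw f (A - ?C) (B - ?D)"
    using bf' by (rule bij_betw_cong[THEN iffD1, rotated]) (simp add: f_def)
  ultimately have "bij_betw f (?C \<union> (A - ?C)) (?D \<union> (B - ?D))"
    by (rule bij_betw_combine) blast
  moreover have "?C \<subseteq> A" "?D \<subseteq> B"
    using porbit_subset a b(1) g(2) s(2) by auto
  ultimately have "bij_betw f A B" by (simp add: Un_absorb1 Un_Diff_cancel)
  moreover have "f (g x) = s (f x)" if x: "x \<in> A" for x
  proof (cases "x \<in> ?C")
    case True
    then obtain k where k: "x = (g ^^ k) a" by (auto simp: porbit_eq_range)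
    have "g x \<in> ?C" using image_porbit[OF g(1), of a] True by blast
    hence "f (g x) = cycle_map g s a b ((g ^^ Suc k) a)" using k by (simp add: f_def)
    also have "\<dots> = (s ^^ Suc k) b" by (rule cycle_map_funpow[OF g(1) s(1) b(2)])
    also have "\<dots> = s (f x)" using True k cycle_map_funpow[OF g(1) s(1) b(2)] by (simp add: f_def)
    finally show ?thesis .
  next
    case False
    hence "g x \<in> A - ?C" using x image_diff_porbit[OF g, of a] by blast
    thus ?thesis using False x cf' by (simp add: f_def)
  qed
  moreover have "f x = x" if "x \<notin> A" for x using that of' \<open>?C \<subseteq> A\<close> by (auto simp: f_def)
  ultimately have "f \<in> conjugators A B g s" unfolding conjugators_def by blast
  thus ?thesis unfolding f_def .
qed

lemma bij_betw_conjugators_remove_cycle: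
  assumes g: "permutation g" "g ` A = A" and s: "permutation s" "s ` B = B" and a: "a \<in> A"
  shows "bij_betw (\<lambda>f. (f a, \<lambda>x. if x \<in> porbit g a then x else f x)) (conjugators A B g s)
           (SIGMA b:{b \<in> B. least_power s b = least_power g a}.
              conjugators (A - porbit g a) (B - porbit s b) g s)"
proof -
  let ?C = "porbit g a"
  define restr where "restr = (\<lambda>f. (f a, \<lambda>x. if x \<in> ?C then x else f x :: nat))"
  define ext where "ext = (\<lambda>y x. if x \<in> ?C then cycle_map g s a (fst y) x else snd y x)"
  define Sig where "Sig = (SIGMA b:{b \<in> B. least_power s b = least_power g a}.
    conjugators (A - ?C) (B - porbit s b) g s)"
  have "ext (restr f) = f" if f: "f \<in> conjugators A B g s" for f
  proof
    fix x
    have "f ((g ^^ k) a) = (s ^^ k) (f a)" for k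
      using conjugator_funpow[of g A f s a] f a g(2) unfolding conjugators_def by simp
    thus "ext (restr f) x = f x"
      using cycle_map_funpow[OF g(1) s(1) conjugator_restrict(1)[OF g s(1) f a]]
      unfolding ext_def restr_def by (auto simp: porbit_eq_range)
  qed
  moreover have "restr (ext (b, f')) = (b, f')" if "(b, f') \<in> Sig" for b f'
  proof -
    have "f' x = x" if "x \<in> ?C" for x
      using that \<open>(b, f') \<in> Sig\<close> unfolding Sig_def conjugators_def by auto
    moreover have "cycle_map g s a b a = b"
      using cycle_map_funpow[OF g(1) s(1), of b a 0] \<open>(b, f') \<in> Sig\<close> unfolding Sig_def by simp
    ultimately show ?thesis unfolding ext_def restr_def by (auto simp: fun_eq_iff)
  qed
  moreover have "restr f \<in> Sig" if f: "f \<in> conjugators A B g s" for f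
  proof -
    have "f a \<in> B" using f a by (auto simp: conjugators_def bij_betw_def)
    thus ?thesis using conjugator_restrict[OF g s(1) f a] unfolding restr_def Sig_def by simp
  qed
  moreover have "ext (b, f') \<in> conjugators A B g s" if "(b, f') \<in> Sig" for b f'
    using conjugator_extend[OF g s a] that unfolding ext_def Sig_def by simp
  ultimately have "bij_betw restr (conjugators A B g s) Sig"
    by (intro bij_betw_byWitness[where f' = ext]) auto
  thus ?thesis unfolding restr_def Sig_def .
qed

lemma conjugators_empty: "conjugators {} B g s = (if B = {} then {id} else {})"
  unfolding conjugators_def by (auto simp: bij_betw_def)

text \<open>\<open>zee \<lambda>\<close> is the order of the centraliser of a permutation of cycle type \<open>\<lambda>\<close>.\<close>

theorem card_conjugators:
  assumes "finite A" "permutation g" "g ` A = A" "finite B" "permutation s" "s ` B = B"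
  shows "card (conjugators A B g s) =
    (if cycle_type_on A g = cycle_type_on B s then zee (cycle_type_on A g) else 0)"
  using assms
proof (induction "card A" arbitrary: A B rule: less_induct)
  case less
  show ?case
  proof (cases "A = {}")
    case True
    thus ?thesis using conjugators_empty cycle_type_on_eq_empty_iff[OF less.prems(4)]
      by (auto simp: zee_def)
  next
    case False
    then obtain a where a: "a \<in> A" by blast
    let ?L = "least_power g a" and ?A' = "A - porbit g a"
    let ?BL = "{b \<in> B. least_power s b = ?L}"
    have ctA: "cycle_type_on A g = add_mset ?L (cycle_type_on ?A' g)"
      using cycle_type_on_remove_cycle[OF less.prems(2,1) a] .
    have lt: "card ?A' < card A"
      using a porbit_self[of a g] less.prems(1) by (intro psubset_card_mono) blast+
    have IH: "card (conjugators ?A' (B - porbit s b) g s) =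
        (if cycle_type_on A g = cycle_type_on B s then zee (cycle_type_on ?A' g) else 0)"
      if b: "b \<in> ?BL" for b
    proof -
      have "cycle_type_on B s = add_mset ?L (cycle_type_on (B - porbit s b) s)"
        using cycle_type_on_remove_cycle[OF less.prems(5,4), of b] b by simp
      moreover have "card (conjugators ?A' (B - porbit s b) g s) = (if cycle_type_on ?A' g =
          cycle_type_on (B - porbit s b) s then zee (cycle_type_on ?A' g) else 0)"
        using less.hyps[OF lt] less.prems image_diff_porbit[of g A a] image_diff_porbit[of s B b]
        by simp
      ultimately show ?thesis using ctA by simp
    qed
    have "card (conjugators A B g s) = card (SIGMA b:?BL. conjugators ?A' (B - porbit s b) g s)"
      using bij_betw_same_card[OF bij_betw_conjugators_remove_cycle[OF less.prems(2,3,5,6) a]] .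
    also have "\<dots> = (\<Sum>b\<in>?BL. card (conjugators ?A' (B - porbit s b) g s))"
      using less.prems(1,4) by (intro card_SigmaI) (auto intro: finite_conjugators)
    also have "\<dots> = card ?BL *
        (if cycle_type_on A g = cycle_type_on B s then zee (cycle_type_on ?A' g) else 0)"
      using IH by simp
    also have "\<dots> = (if cycle_type_on A g = cycle_type_on B s then zee (cycle_type_on A g) else 0)"
      using zee_remove_part[OF less.prems(5,4,6)] ctA by auto
    finally show ?thesis .
  qed
qed

lemma stdp_Cons_block:
  "i \<in> {off+1..off+a} \<Longrightarrow> stdp off (a # as) i = (if i = off + a then off + 1 else i + 1)"
  by simp

lemma stdp_Cons_rest: "i \<notin> {off+1..off+a} \<Longrightarrow> stdp off (a # as) i = stdp (off + a) as i"
  by auto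

declare stdp.simps(2) [simp del]

lemma funpow_stdp_Cons_block:
  assumes "0 < a" "x \<in> {off+1..off+a}"
  shows "(stdp off (a # as) ^^ k) x = off + 1 + (x - off - 1 + k) mod a"
proof (induction k)
  case (Suc k)
  let ?r = "(x - off - 1 + k) mod a"
  have "?r < a" using assms(1) by simp
  moreover have "(x - off - 1 + Suc k) mod a = (if ?r = a - 1 then 0 else Suc ?r)"
    using \<open>?r < a\<close> by (auto simp: mod_Suc_eq mod_Suc)
  ultimately show ?case using Suc.IH by (auto simp: stdp_Cons_block)
qed (use assms in auto)

lemma porbit_stdp_Cons_block:
  assumes "0 < a" "x \<in> {off+1..off+a}"
  shows "porbit (stdp off (a # as)) x = {off+1..off+a}"
proof (intro equalityI subsetI)
  fix y assume "y \<in> porbit (stdp off (a # as)) x"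
  thus "y \<in> {off+1..off+a}"
    using funpow_stdp_Cons_block[OF assms] mod_less_divisor[OF assms(1)]
    by (auto simp: porbit_eq_range Suc_le_eq)
next
  fix y assume y: "y \<in> {off+1..off+a}"
  have "x - off - 1 + (y + a - x) = (y - off - 1) + a" "y - off - 1 < a" using assms(2) y by auto
  hence "(x - off - 1 + (y + a - x)) mod a = y - off - 1" by simp
  hence "(stdp off (a # as) ^^ (y + a - x)) x = y"
    using funpow_stdp_Cons_block[OF assms] y by simp
  thus "y \<in> porbit (stdp off (a # as)) x" unfolding porbit_eq_range by (metis rangeI)
qed

lemma stdp_permutes:
  assumes "0 \<notin> set as"
  shows "stdp off as permutes {off+1..off+sum_list as}"
  using assms
proof (induction as arbitrary: off)
  case Nil
  show ?case by (simp add: permutes_def)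
next
  case (Cons a as)
  let ?f = "stdp off (a # as)" and ?B = "{off+1..off+a}" and ?R' = "{off+a+1..off+a+sum_list as}"
  have a: "0 < a" and g: "stdp (off + a) as permutes ?R'"
    using Cons.IH[of "off + a"] Cons.prems by (simp_all add: add.assoc)
  have "inj_on ?f ?B" by (auto simp: inj_on_def stdp_Cons_block split: if_splits)
  moreover have "?f ` ?B \<subseteq> ?B" using a by (auto simp: stdp_Cons_block)
  ultimately have "bij_betw ?f ?B ?B" by (simp add: bij_betw_def card_image card_subset_eq)
  moreover have "bij_betw ?f ?R' ?R'"
    using permutes_imp_bij[OF g] by (rule bij_betw_cong[THEN iffD1, rotated]) (simp add: stdp_Cons_rest)
  ultimately have "bij_betw ?f (?B \<union> ?R') (?B \<union> ?R')" by (rule bij_betw_combine) auto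
  moreover have "?f x = x" if "x \<notin> ?B \<union> ?R'" for x
    using that permutes_not_in[OF g] by (simp add: stdp_Cons_rest)
  ultimately have "?f permutes ?B \<union> ?R'" by (rule bij_imp_permutes)
  moreover have "{off+1..off+sum_list (a # as)} = ?B \<union> ?R'" by auto
  ultimately show ?case by simp
qed

lemma cycle_type_on_stdp:
  assumes "0 \<notin> set as"
  shows "cycle_type_on {off+1..off+sum_list as} (stdp off as) = mset as"
  using assms
proof (induction as arbitrary: off)
  case (Cons a as)
  let ?f = "stdp off (a # as)" and ?g = "stdp (off + a) as"
  let ?B = "{off+1..off+a}" and ?R' = "{off+a+1..off+a+sum_list as}"
  have a: "0 < a" using Cons.prems by simp
  have g: "?g permutes ?R'" and IH: "cycle_type_on ?R' ?g = mset as"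
    using stdp_permutes[of as "off + a"] Cons.IH[of "off + a"] Cons.prems by (simp_all add: add.assoc)
  have f: "permutation ?f"
    using permutes_imp_permutation[OF _ stdp_permutes[OF Cons.prems]] by simp
  have "porbit ?f x = porbit ?g x" if "x \<in> ?R'" for x
  proof -
    have "(?f ^^ k) x = (?g ^^ k) x \<and> (?g ^^ k) x \<in> ?R'" for k
      using that permutes_in_image[OF g] by (induction k) (auto simp: stdp_Cons_rest)
    thus ?thesis by (simp add: porbit_eq_range)
  qed
  hence "cycle_type_on ?R' ?f = mset as" using IH by (simp add: cycle_type_on_def)
  moreover have "porbit ?f (off + 1) = ?B" using porbit_stdp_Cons_block[OF a] a by simp
  moreover have "least_power ?f (off + 1) = a"
    using calculation(2) card_porbit[OF f, of "off + 1", symmetric] by simp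
  moreover have "{off+1..off+sum_list (a # as)} = ?B \<union> ?R'" "(?B \<union> ?R') - ?B = ?R'" by auto
  ultimately show ?case
    using cycle_type_on_remove_cycle[OF f, of "?B \<union> ?R'" "off + 1"] a by simp
qed simp

lemma sigma_permutes: "\<mu> \<in> partitions n \<Longrightarrow> sigma \<mu> permutes {1..n}"
  and cycle_type_sigma: "\<mu> \<in> partitions n \<Longrightarrow> cycle_type n (sigma \<mu>) = \<mu>"
  using stdp_permutes[of "rev (sorted_list_of_multiset \<mu>)" 0]
    cycle_type_on_stdp[of "rev (sorted_list_of_multiset \<mu>)" 0]
  unfolding partitions_def sigma_def cycle_type_eq_on
  by (simp_all add: sum_mset_sum_list[symmetric])

definition cyc_group :: "(nat \<Rightarrow> nat) \<Rightarrow> (nat \<Rightarrow> nat) set" where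
  "cyc_group c = {c ^^ k | k. True}"

lemma cyc_group_eq_range: "cyc_group c = range ((^^) c)"
  unfolding cyc_group_def by auto

lemma cgroup_eq_cyc_group: "cgroup \<mu> = cyc_group (sigma \<mu>)"
  unfolding cgroup_def cyc_group_def ..

lemma cyc_group_permutes: "c permutes S \<Longrightarrow> g \<in> cyc_group c \<Longrightarrow> g permutes S"
  unfolding cyc_group_def using permutes_funpow by blast

lemma id_in_cyc_group: "id \<in> cyc_group c"
  unfolding cyc_group_def by (auto intro: exI[of _ 0])

lemma self_in_cyc_group: "c \<in> cyc_group c"
  unfolding cyc_group_def by (auto intro: exI[of _ 1])

lemma cyc_group_comp: "g \<in> cyc_group c \<Longrightarrow> h \<in> cyc_group c \<Longrightarrow> g \<circ> h \<in> cyc_group c"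
  unfolding cyc_group_def by (auto simp flip: funpow_add)

lemma finite_cyc_group:
  assumes "finite S" "c permutes S"
  shows "finite (cyc_group c)"
proof (rule finite_subset)
  show "cyc_group c \<subseteq> {p. p permutes S}" using cyc_group_permutes[OF assms(2)] by blast
qed (rule finite_permutations[OF assms(1)])

lemma card_cyc_group_pos: "c permutes {1..n} \<Longrightarrow> card (cyc_group c) > 0"
  using finite_cyc_group[of "{1..n}" c] id_in_cyc_group[of c] by (auto simp: card_gt_0_iff)

lemma funpow_period_mult: "c ^^ p = id \<Longrightarrow> c ^^ (p * m) = id"
  by (metis funpow_mult id_funpow)

lemma comp_cyc_group:
  assumes "permutation c" "h \<in> cyc_group c"
  shows "(\<circ>) h ` cyc_group c = cyc_group c"
proof
  show "(\<circ>) h ` cyc_group c \<subseteq> cyc_group c" using cyc_group_comp[OF assms(2)] by auto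
  obtain p where p: "c ^^ p = id" "p > 0" using permutation_is_nilpotent[OF assms(1)] by blast
  obtain i where h: "h = c ^^ i" using assms(2) unfolding cyc_group_def by auto
  have "c ^^ k = h \<circ> c ^^ (k + i * (p - 1))" for k
  proof -
    have "h \<circ> c ^^ (k + i * (p - 1)) = c ^^ (k + p * i)"
      unfolding h funpow_add[symmetric] using p(2) by (cases p) (simp_all add: algebra_simps)
    also have "\<dots> = c ^^ k" using funpow_period_mult[OF p(1)] by (simp add: funpow_add)
    finally show ?thesis by simp
  qed
  thus "cyc_group c \<subseteq> (\<circ>) h ` cyc_group c" unfolding cyc_group_def by blast
qed

lemma subgroup_cyc_group:
  assumes "permutation c" "L \<subseteq> cyc_group c" "id \<in> L"
    and comp: "\<And>g h. g \<in> L \<Longrightarrow> h \<in> L \<Longrightarrow> g \<circ> h \<in> L"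
  shows "\<exists>d\<in>L. L = cyc_group d"
proof -
  obtain p where p: "c ^^ p = id" "p > 0" using permutation_is_nilpotent[OF assms(1)] by blast
  define d where "d = (LEAST k. k > 0 \<and> c ^^ k \<in> L)"
  have d: "d > 0" "c ^^ d \<in> L" using LeastI[of "\<lambda>k. k > 0 \<and> c ^^ k \<in> L" p] p assms(3)
    unfolding d_def by auto
  have d_min: "c ^^ k \<notin> L" if "0 < k" "k < d" for k
    using not_less_Least that unfolding d_def by blast
  have powers_in: "(c ^^ d) ^^ j \<in> L" for j
  proof (induction j)
    case (Suc j)
    show ?case using comp[OF d(2) Suc.IH] by (simp only: funpow.simps(2))
  qed (use assms(3) in \<open>simp add: id_def\<close>)
  have "L \<subseteq> cyc_group (c ^^ d)"
  proof
    fix g assume g: "g \<in> L"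
    then obtain m where m: "g = c ^^ m" using assms(2) unfolding cyc_group_def by auto
    \<comment> \<open>as \<open>c ^^ p = id\<close>, the inverse of \<open>(c ^^ d) ^^ q\<close> is \<open>(c ^^ d) ^^ (q * (p - 1))\<close>\<close>
    have "c ^^ (m mod d) = c ^^ (m mod d + p * (m div d * d))"
      using funpow_period_mult[OF p(1)] by (simp add: funpow_add)
    also have "m mod d + p * (m div d * d) = m + d * (m div d * (p - 1))"
      using p(2) by (cases p) (simp_all add: algebra_simps)
    also have "c ^^ (m + d * (m div d * (p - 1))) = g \<circ> (c ^^ d) ^^ (m div d * (p - 1))"
      unfolding m by (simp add: funpow_add funpow_mult)
    finally have "c ^^ (m mod d) \<in> L" using comp[OF g powers_in] by simp
    hence "m mod d = 0" using d_min[of "m mod d"] d(1) by (meson mod_less_divisor neq0_conv)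
    hence "m = d * (m div d)" by (metis add.right_neutral mult_div_mod_eq)
    hence "g = (c ^^ d) ^^ (m div d)" unfolding m by (metis funpow_mult)
    thus "g \<in> cyc_group (c ^^ d)" unfolding cyc_group_def by auto
  qed
  moreover have "cyc_group (c ^^ d) \<subseteq> L" unfolding cyc_group_def using powers_in by auto
  ultimately show ?thesis using d(2) by blast
qed

lemma map_permutation_funpow:
  assumes "inj_on f A" "q permutes A"
  shows "map_permutation A f (q ^^ k) = map_permutation A f q ^^ k"
proof (induction k)
  case 0 thus ?case using map_permutation_id'[OF assms(1)] by (simp add: id_def)
next
  case (Suc k)
  thus ?case using map_permutation_compose'[OF assms(1) permutes_funpow[OF assms(2)], of q k]
    by (simp only: funpow.simps(2))
qed

lemma map_permutation_cyc_group:
  assumes "inj_on f A" "c permutes A"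
  shows "map_permutation A f ` cyc_group c = cyc_group (map_permutation A f c)"
  unfolding cyc_group_eq_range image_image map_permutation_funpow[OF assms] ..

lemma cycle_type_power:
  assumes "c permutes {1..n}" "g \<in> cyc_group c"
  shows "size (cycle_type n c) \<le> size (cycle_type n g)"
    and "size (cycle_type n c) = size (cycle_type n g) \<Longrightarrow> cycle_type n g = cycle_type n c"
proof -
  let ?N = "{1..n}"
  have c: "permutation c" using permutes_imp_permutation[OF _ assms(1)] by simp
  have cN: "c ` ?N \<subseteq> ?N" using permutes_image[OF assms(1)] by simp
  obtain k where k: "g = c ^^ k" using assms(2) unfolding cyc_group_def by auto
  have "((c ^^ k) ^^ j) x \<in> porbit c x" for j x
    using rangeI[of "\<lambda>i. (c ^^ i) x" "k * j"] by (simp add: porbit_eq_range funpow_mult)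
  hence sub: "porbit g x \<subseteq> porbit c x" for x unfolding k porbit_eq_range[of "c ^^ k"] by blast
  define F where "F Q = \<Union> (porbit c ` Q)" for Q
  have F: "F (porbit g x) = porbit c x" for x
  proof
    show "F (porbit g x) \<subseteq> porbit c x" unfolding F_def using sub porbit_eq[OF c] by blast
    show "porbit c x \<subseteq> F (porbit g x)" unfolding F_def using porbit_self[of x g] by blast
  qed
  have img: "porbit c ` ?N = F ` porbit g ` ?N" unfolding image_image F by simp
  show "size (cycle_type n c) \<le> size (cycle_type n g)"
    unfolding cycle_type_eq_on size_cycle_type_on img by (rule card_image_le) simp
  assume "size (cycle_type n c) = size (cycle_type n g)"
  hence inj: "inj_on F (porbit g ` ?N)"
    unfolding cycle_type_eq_on size_cycle_type_on img by (intro eq_card_imp_inj_on) simp_all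
  have "porbit c x \<subseteq> porbit g x" if x: "x \<in> ?N" for x
  proof
    fix y assume y: "y \<in> porbit c x"
    have "y \<in> ?N" using porbit_subset[OF cN x] y by blast
    moreover have "F (porbit g y) = F (porbit g x)" using F porbit_eq[OF c y] by simp
    ultimately have "porbit g y = porbit g x" using inj_onD[OF inj] x by blast
    thus "y \<in> porbit g x" by (metis porbit_self)
  qed
  hence "porbit g x = porbit c x" if "x \<in> ?N" for x using sub that by blast
  hence "porbit g ` ?N = porbit c ` ?N" by (rule image_cong[OF refl])
  thus "cycle_type n g = cycle_type n c" unfolding cycle_type_def by simp
qed

section \<open>The species \<open>X\<^sup>n/\<langle>\<sigma>\<rangle>\<close>\<close>

lemma conjg_eq_map_permutation:
  assumes "bij_betw f {1..n} U"
  shows "conjg n U f = map_permutation {1..n} f"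
  using assms unfolding conjg_def map_permutation_def restrict_id_def bij_betw_def
  by (auto simp: fun_eq_iff)

lemma conjg_permutes:
  assumes "bij_betw f {1..n} U" "g permutes {1..n}"
  shows "conjg n U f g permutes U"
  unfolding conjg_def using permutes_bij_inv_into[OF assms(2,1)] .

lemma inj_on_map_permutation:
  assumes "bij_betw h U V"
  shows "inj_on (map_permutation U h) {\<pi>. \<pi> permutes U}"
proof (rule inj_onI)
  fix p q assume p: "p \<in> {\<pi>. \<pi> permutes U}" and q: "q \<in> {\<pi>. \<pi> permutes U}"
    and eq: "map_permutation U h p = map_permutation U h q"
  have inv: "\<And>x. x \<in> U \<Longrightarrow> inv_into U h (h x) = x"
    using assms by (simp add: bij_betw_def inv_into_f_f)
  show "p = q"
    using map_permutation_compose_inv[OF assms _ inv] p q eq by (metis mem_Collect_eq)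
qed

lemma act_comp: "act n \<pi> (act n \<rho> s) = act n (\<pi> \<circ> \<rho>) s"
  unfolding act_def image_image by (intro image_cong refl) (auto simp: fun_eq_iff)

lemma act_coset:
  assumes "l \<in> extensional {1..n}" "\<forall>h\<in>H. h permutes {1..n}"
  shows "act n \<tau> (coset l H) = coset (restrict (\<tau> \<circ> l) {1..n}) H"
  unfolding act_def coset_def image_image
proof (intro image_cong refl ext)
  fix h x assume "h \<in> H"
  hence h: "h permutes {1..n}" using assms(2) by blast
  show "restrict (\<tau> \<circ> (l \<circ> h)) {1..n} x = (restrict (\<tau> \<circ> l) {1..n} \<circ> h) x"
    using permutes_in_image[OF h] permutes_not_in[OF h] by (cases "x \<in> {1..n}") auto
qed

lemma coset_cyc_group_eq_iff:
  assumes "permutation c"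
  shows "coset l' (cyc_group c) = coset l (cyc_group c) \<longleftrightarrow> (\<exists>h\<in>cyc_group c. l' = l \<circ> h)"
proof
  assume "coset l' (cyc_group c) = coset l (cyc_group c)"
  moreover have "l' \<in> coset l' (cyc_group c)"
    unfolding coset_def using id_in_cyc_group[of c] by (intro image_eqI[of _ _ id]) auto
  ultimately show "\<exists>h\<in>cyc_group c. l' = l \<circ> h" unfolding coset_def by auto
next
  assume "\<exists>h\<in>cyc_group c. l' = l \<circ> h"
  then obtain h where h: "h \<in> cyc_group c" "l' = l \<circ> h" by blast
  have "coset l' (cyc_group c) = (\<circ>) l ` ((\<circ>) h ` cyc_group c)"
    unfolding coset_def h(2) image_image by (simp add: o_assoc)
  thus "coset l' (cyc_group c) = coset l (cyc_group c)"
    unfolding comp_cyc_group[OF assms h(1)] coset_def .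
qed

lemma restrict_comp_eq_iff_conjg:
  assumes l: "l \<in> bijs n U" and \<tau>: "\<tau> permutes U" and h: "h permutes {1..n}"
  shows "restrict (\<tau> \<circ> l) {1..n} = l \<circ> h \<longleftrightarrow> \<tau> = conjg n U l h"
proof -
  let ?N = "{1..n}"
  have lb: "bij_betw l ?N U" and le: "l \<in> extensional ?N" using l unfolding bijs_def by auto
  show ?thesis
  proof
    assume eq: "restrict (\<tau> \<circ> l) ?N = l \<circ> h"
    show "\<tau> = conjg n U l h"
    proof
      fix y show "\<tau> y = conjg n U l h y"
      proof (cases "y \<in> U")
        case True
        define x where "x = inv_into ?N l y"
        have x: "x \<in> ?N" "l x = y" unfolding x_def using lb True
          by (auto simp: bij_betw_def inv_into_into f_inv_into_f)
        have "\<tau> y = restrict (\<tau> \<circ> l) ?N x" using x by simp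
        also have "\<dots> = l (h x)" using eq by simp
        finally show ?thesis unfolding conjg_def x_def using True by simp
      next
        case False thus ?thesis unfolding conjg_def using permutes_not_in[OF \<tau> False] by simp
      qed
    qed
  next
    assume eq: "\<tau> = conjg n U l h"
    show "restrict (\<tau> \<circ> l) ?N = l \<circ> h"
    proof
      fix x show "restrict (\<tau> \<circ> l) ?N x = (l \<circ> h) x"
      proof (cases "x \<in> ?N")
        case True
        have "l x \<in> U" using lb True by (auto simp: bij_betw_def)
        moreover have "inv_into ?N l (l x) = x" using lb True by (simp add: bij_betw_def inv_into_f_f)
        ultimately show ?thesis using True unfolding eq conjg_def by simp
      next
        case False
        thus ?thesis using le permutes_not_in[OF h False] by (auto simp: extensional_def)
      qed
    qed
  qed
qed

lemma Aut_coset: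
  assumes l: "l \<in> bijs n U" and c: "c permutes {1..n}"
  shows "Aut n U (coset l (cyc_group c)) = conjg n U l ` cyc_group c"
proof -
  let ?N = "{1..n}" and ?H = "cyc_group c"
  have lb: "bij_betw l ?N U" and le: "l \<in> extensional ?N" using l unfolding bijs_def by auto
  have H: "\<forall>h\<in>?H. h permutes ?N" using cyc_group_permutes[OF c] by blast
  have cp: "permutation c" using permutes_imp_permutation[OF _ c] by simp
  have "\<tau> \<in> Aut n U (coset l ?H) \<longleftrightarrow> (\<exists>h\<in>?H. \<tau> = conjg n U l h)" if \<tau>: "\<tau> permutes U" for \<tau>
    unfolding Aut_def act_coset[OF le H] coset_cyc_group_eq_iff[OF cp]
    using restrict_comp_eq_iff_conjg[OF l \<tau>] H \<tau> by auto
  moreover have "conjg n U l h permutes U" if "h \<in> ?H" for h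
    using conjg_permutes[OF lb] H that by blast
  ultimately show ?thesis unfolding Aut_def by blast
qed

lemma Cspec_cases:
  assumes "s \<in> Cspec \<alpha> U" "\<alpha> \<in> partitions n"
  obtains l where "l \<in> bijs n U" "s = coset l (cyc_group (sigma \<alpha>))"
  using assms unfolding Cspec_def Xquot_def partitions_def cgroup_eq_cyc_group by auto

lemma act_id_Cspec:
  assumes "s \<in> Cspec \<alpha> U" "\<alpha> \<in> partitions n"
  shows "act n id s = s"
proof -
  obtain l where l: "l \<in> bijs n U" "s = coset l (cyc_group (sigma \<alpha>))"
    using Cspec_cases[OF assms] .
  have le: "l \<in> extensional {1..n}" using l(1) unfolding bijs_def by auto
  have "act n id s = coset (restrict (id \<circ> l) {1..n}) (cyc_group (sigma \<alpha>))"
    unfolding l(2) using act_coset[OF le] cyc_group_permutes[OF sigma_permutes[OF assms(2)]] by blast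
  also have "restrict (id \<circ> l) {1..n} = l" using le by (auto simp: extensional_def fun_eq_iff)
  finally show ?thesis using l(2) by (simp add: id_def)
qed

lemma Cspec_transport:
  fixes U :: "'a set" and V :: "'b set"
  assumes "s \<in> Cspec \<alpha> U" "\<alpha> \<in> partitions n" "bij_betw h U V"
  shows "act n h s \<in> Cspec \<alpha> V"
    and "Aut n V (act n h s) = map_permutation U h ` Aut n U s"
proof -
  let ?N = "{1..n}" and ?H = "cyc_group (sigma \<alpha>)"
  obtain l where l: "l \<in> bijs n U" "s = coset l ?H" using Cspec_cases[OF assms(1,2)] .
  have lb: "bij_betw l ?N U" and le: "l \<in> extensional ?N" using l(1) unfolding bijs_def by auto
  have sp: "sigma \<alpha> permutes ?N" using sigma_permutes[OF assms(2)] .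
  have H: "\<forall>g\<in>?H. g permutes ?N" using cyc_group_permutes[OF sp] by blast
  define l' where "l' = restrict (h \<circ> l) ?N"
  have l'b: "bij_betw l' ?N V" unfolding l'_def
    using bij_betw_trans[OF lb assms(3)] by (rule bij_betw_cong[THEN iffD1, rotated]) simp
  have l': "l' \<in> bijs n V" unfolding bijs_def using l'b by (simp add: l'_def)
  have act: "act n h s = coset l' ?H" unfolding l(2) l'_def using act_coset[OF le H] .
  show "act n h s \<in> Cspec \<alpha> V"
    unfolding act Cspec_def Xquot_def cgroup_eq_cyc_group using l' assms(2)
    by (auto simp: partitions_def)
  have "Aut n V (act n h s) = map_permutation ?N l' ` ?H"
    unfolding act Aut_coset[OF l' sp] conjg_eq_map_permutation[OF l'b] ..
  also have "\<dots> = map_permutation ?N (h \<circ> l) ` ?H"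
    using l'b H by (intro image_cong refl map_permutation_cong) (auto simp: l'_def bij_betw_def)
  also have "\<dots> = map_permutation U h ` map_permutation ?N l ` ?H"
    unfolding image_image using map_permutation_compose[OF lb bij_betw_imp_inj_on[OF assms(3)]]
    by simp
  also have "map_permutation ?N l ` ?H = Aut n U s"
    unfolding l(2) Aut_coset[OF l(1) sp] conjg_eq_map_permutation[OF lb] ..
  finally show "Aut n V (act n h s) = map_permutation U h ` Aut n U s" .
qed

lemma Cmu_subset_Cspec: "Cmu \<alpha> \<beta> \<mu> U \<subseteq> Cspec \<alpha> U \<times> Cspec \<beta> U"
  unfolding Cmu_def by auto

lemma Cmu_transport:
  fixes U :: "'a set" and V :: "'b set"
  assumes \<alpha>: "\<alpha> \<in> partitions n" and \<beta>: "\<beta> \<in> partitions n" and h: "bij_betw h U V"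
    and st: "(s, t) \<in> Cmu \<alpha> \<beta> \<mu> U"
  shows "(act n h s, act n h t) \<in> Cmu \<alpha> \<beta> \<mu> V"
proof -
  have n: "sum_mset \<alpha> = n" using \<alpha> unfolding partitions_def by simp
  have s: "s \<in> Cspec \<alpha> U" and t: "t \<in> Cspec \<beta> U"
    and iso: "iso_sub n U (Aut n U s \<inter> Aut n U t) (cgroup \<mu>)"
    using st unfolding Cmu_def n by auto
  obtain f where f: "bij_betw f {1..n} U" "Aut n U s \<inter> Aut n U t = conjg n U f ` cgroup \<mu>"
    using iso unfolding iso_sub_def by blast
  let ?T = "map_permutation U h"
  have hf: "bij_betw (h \<circ> f) {1..n} V" using bij_betw_trans[OF f(1) h] .
  have "Aut n V (act n h s) \<inter> Aut n V (act n h t) = ?T ` (Aut n U s \<inter> Aut n U t)"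
    unfolding Cspec_transport(2)[OF s \<alpha> h] Cspec_transport(2)[OF t \<beta> h]
    using inj_on_map_permutation[OF h] by (rule inj_on_image_Int[symmetric]) (auto simp: Aut_def)
  also have "\<dots> = conjg n V (h \<circ> f) ` cgroup \<mu>"
    unfolding f(2) conjg_eq_map_permutation[OF f(1)] conjg_eq_map_permutation[OF hf] image_image
    using map_permutation_compose[OF f(1) bij_betw_imp_inj_on[OF h]] by simp
  finally have "iso_sub n V (Aut n V (act n h s) \<inter> Aut n V (act n h t)) (cgroup \<mu>)"
    unfolding iso_sub_def using hf by blast
  thus ?thesis
    unfolding Cmu_def n using Cspec_transport(1)[OF s \<alpha> h] Cspec_transport(1)[OF t \<beta> h] by simp
qed

lemma Cmu_subspecies:
  assumes "\<alpha> \<in> partitions n" "\<beta> \<in> partitions n" "bij_betw h U V"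
  shows "Cmu \<alpha> \<beta> \<mu> U \<subseteq> Cspec \<alpha> U \<times> Cspec \<beta> U \<and>
    (\<forall>(s, t) \<in> Cmu \<alpha> \<beta> \<mu> U. (act n h s, act n h t) \<in> Cmu \<alpha> \<beta> \<mu> V)"
proof (intro conjI Cmu_subset_Cspec, clarify)
  fix s t assume "(s, t) \<in> Cmu \<alpha> \<beta> \<mu> U"
  thus "(act n h s, act n h t) \<in> Cmu \<alpha> \<beta> \<mu> V" by (rule Cmu_transport[OF assms])
qed

lemma cycle_type_conjg:
  assumes "bij_betw f {1..n} {1..n}" "g permutes {1..n}"
  shows "cycle_type n (conjg n {1..n} f g) = cycle_type n g"
proof -
  let ?N = "{1..n}" and ?s = "conjg n {1..n} f g"
  have s: "?s permutes ?N" using conjg_permutes[OF assms] .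
  define f' where "f' x = (if x \<in> ?N then f x else x)" for x
  have "f' \<in> conjugators ?N ?N g ?s"
    unfolding conjugators_def
  proof (intro CollectI conjI allI ballI impI)
    show "bij_betw f' ?N ?N" using assms(1) by (rule bij_betw_cong[THEN iffD1, rotated]) (simp add: f'_def)
    fix x assume x: "x \<in> ?N"
    have "f x \<in> ?N" "g x \<in> ?N" using assms x permutes_in_image[OF assms(2)] by (auto simp: bij_betw_def)
    moreover have "inv_into ?N f (f x) = x" using assms(1) x by (simp add: bij_betw_def inv_into_f_f)
    ultimately show "f' (g x) = ?s (f' x)" using x unfolding f'_def conjg_def by simp
  qed (auto simp: f'_def)
  hence "card (conjugators ?N ?N g ?s) \<noteq> 0" using finite_conjugators[of ?N ?N g ?s] by auto
  thus ?thesis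
    using card_conjugators[of ?N g ?N ?s] permutes_imp_permutation[OF _ assms(2)]
      permutes_imp_permutation[OF _ s] permutes_image[OF assms(2)] permutes_image[OF s]
    by (auto simp: cycle_type_eq_on split: if_splits)
qed

lemma conjugators_eq_conjugating_perms:
  assumes g: "g permutes S" and \<sigma>: "\<sigma> permutes S"
  shows "conjugators S S g \<sigma> = {\<pi>. \<pi> permutes S \<and> inv \<pi> \<circ> \<sigma> \<circ> \<pi> = g}"
proof (intro equalityI subsetI CollectI conjI)
  fix \<pi> assume "\<pi> \<in> conjugators S S g \<sigma>"
  hence b: "bij_betw \<pi> S S" and c: "\<forall>x\<in>S. \<pi> (g x) = \<sigma> (\<pi> x)"
    and o: "\<forall>x. x \<notin> S \<longrightarrow> \<pi> x = x" unfolding conjugators_def by auto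
  show \<pi>: "\<pi> permutes S" using b o by (auto intro: bij_imp_permutes)
  have "(inv \<pi> \<circ> \<sigma> \<circ> \<pi>) x = g x" for x
  proof (cases "x \<in> S")
    case True
    hence "\<sigma> (\<pi> x) = \<pi> (g x)" using c by simp
    thus ?thesis using permutes_inverses(2)[OF \<pi>] by simp
  next
    case False
    thus ?thesis using o permutes_not_in[OF \<sigma>] permutes_not_in[OF g]
      permutes_not_in[OF permutes_inv[OF \<pi>]] by simp
  qed
  thus "inv \<pi> \<circ> \<sigma> \<circ> \<pi> = g" by (simp add: fun_eq_iff)
next
  fix \<pi> assume "\<pi> \<in> {\<pi>. \<pi> permutes S \<and> inv \<pi> \<circ> \<sigma> \<circ> \<pi> = g}"
  hence \<pi>: "\<pi> permutes S" and eq: "inv \<pi> \<circ> \<sigma> \<circ> \<pi> = g" by auto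
  have "\<pi> (g x) = \<sigma> (\<pi> x)" for x
    unfolding eq[symmetric] using permutes_inverses(1)[OF \<pi>] by simp
  thus "\<pi> \<in> conjugators S S g \<sigma>" unfolding conjugators_def
    using permutes_imp_bij[OF \<pi>] permutes_not_in[OF \<pi>] by auto
qed

lemma card_conjugacy_preimage:
  assumes "L \<subseteq> {\<pi>. \<pi> permutes {1..n}}" "\<sigma> permutes {1..n}"
  shows "card {\<pi>. \<pi> permutes {1..n} \<and> inv \<pi> \<circ> \<sigma> \<circ> \<pi> \<in> L}
       = zee (cycle_type n \<sigma>) * card {g \<in> L. cycle_type n g = cycle_type n \<sigma>}"
proof -
  let ?N = "{1..n}" and ?F = "\<lambda>\<pi>. inv \<pi> \<circ> \<sigma> \<circ> \<pi>"
  let ?Q = "{\<pi>. \<pi> permutes ?N \<and> ?F \<pi> \<in> L}"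
  have finS: "finite {\<pi>. \<pi> permutes ?N}" by (simp add: finite_permutations)
  have finQ: "finite ?Q" using finS by (rule finite_subset[rotated]) auto
  have finL: "finite L" using finS assms(1) by (rule finite_subset[rotated])
  have "?F ` ?Q \<subseteq> L" by auto
  hence "card ?Q = (\<Sum>g\<in>L. card {\<pi> \<in> ?Q. ?F \<pi> = g})"
    using sum.group[OF finQ finL, of ?F "\<lambda>_. 1 :: nat"] by simp
  also have "\<dots> = (\<Sum>g\<in>L. if cycle_type n g = cycle_type n \<sigma> then zee (cycle_type n \<sigma>) else 0)"
  proof (rule sum.cong[OF refl])
    fix g assume g: "g \<in> L"
    hence gp: "g permutes ?N" using assms(1) by auto
    have "{\<pi> \<in> ?Q. ?F \<pi> = g} = conjugators ?N ?N g \<sigma>"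
      unfolding conjugators_eq_conjugating_perms[OF gp assms(2)] using g by auto
    thus "card {\<pi> \<in> ?Q. ?F \<pi> = g} =
        (if cycle_type n g = cycle_type n \<sigma> then zee (cycle_type n \<sigma>) else 0)"
      unfolding cycle_type_eq_on
      using card_conjugators[of ?N g ?N \<sigma>] permutes_imp_permutation[OF _ gp]
        permutes_imp_permutation[OF _ assms(2)] permutes_image[OF gp] permutes_image[OF assms(2)]
      by simp
  qed
  also have "\<dots> = zee (cycle_type n \<sigma>) * card {g \<in> L. cycle_type n g = cycle_type n \<sigma>}"
    using sum.inter_filter[OF finL, of "\<lambda>_. zee (cycle_type n \<sigma>)"
        "\<lambda>g. cycle_type n g = cycle_type n \<sigma>"] by (simp add: mult.commute)
  finally show ?thesis .
qed

lemma card_transporters: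
  fixes a :: "(nat \<Rightarrow> nat) \<Rightarrow> 'x \<Rightarrow> 'x"
  assumes comp: "\<And>\<pi> \<rho> y. a \<pi> (a \<rho> y) = a (\<pi> \<circ> \<rho>) y" and x: "a id x = x"
    and \<pi>0: "\<pi>0 permutes N"
  shows "card {\<pi>. \<pi> permutes N \<and> a \<pi> x = a \<pi>0 x} = card {\<pi>. \<pi> permutes N \<and> a \<pi> x = x}"
proof -
  let ?Stab = "{\<pi>. \<pi> permutes N \<and> a \<pi> x = x}"
  have "{\<pi>. \<pi> permutes N \<and> a \<pi> x = a \<pi>0 x} = (\<circ>) \<pi>0 ` ?Stab"
  proof (intro equalityI subsetI)
    fix \<pi> assume "\<pi> \<in> {\<pi>. \<pi> permutes N \<and> a \<pi> x = a \<pi>0 x}"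
    hence \<pi>: "\<pi> permutes N" "a \<pi> x = a \<pi>0 x" by auto
    have "a (inv \<pi>0 \<circ> \<pi>) x = a (inv \<pi>0 \<circ> \<pi>0) x" using comp \<pi>(2) by metis
    hence "inv \<pi>0 \<circ> \<pi> \<in> ?Stab"
      using x permutes_inv_o(2)[OF \<pi>0] permutes_compose[OF \<pi>(1) permutes_inv[OF \<pi>0]] by simp
    moreover have "\<pi> = \<pi>0 \<circ> (inv \<pi>0 \<circ> \<pi>)"
      using permutes_inv_o(1)[OF \<pi>0] by (simp add: o_assoc)
    ultimately show "\<pi> \<in> (\<circ>) \<pi>0 ` ?Stab" by blast
  qed (auto simp: comp[symmetric] permutes_compose[OF _ \<pi>0])
  moreover have "inj_on ((\<circ>) \<pi>0) ?Stab"
  proof (rule inj_onI)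
    fix \<tau>1 \<tau>2 assume "\<pi>0 \<circ> \<tau>1 = \<pi>0 \<circ> \<tau>2"
    hence "inv \<pi>0 \<circ> \<pi>0 \<circ> \<tau>1 = inv \<pi>0 \<circ> \<pi>0 \<circ> \<tau>2" by (simp add: comp_assoc)
    thus "\<tau>1 = \<tau>2" unfolding permutes_inv_o(2)[OF \<pi>0] by simp
  qed
  ultimately show ?thesis by (simp add: card_image)
qed

lemma fixed_iff_conjugate_stabilises:
  fixes a :: "(nat \<Rightarrow> nat) \<Rightarrow> 'x \<Rightarrow> 'x"
  assumes comp: "\<And>\<pi> \<rho> y. a \<pi> (a \<rho> y) = a (\<pi> \<circ> \<rho>) y" and x: "a id x = x"
    and \<pi>: "\<pi> permutes N"
  shows "a \<sigma> (a \<pi> x) = a \<pi> x \<longleftrightarrow> a (inv \<pi> \<circ> \<sigma> \<circ> \<pi>) x = x"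
proof
  assume "a \<sigma> (a \<pi> x) = a \<pi> x"
  hence "a (inv \<pi> \<circ> \<sigma> \<circ> \<pi>) x = a (inv \<pi> \<circ> \<pi>) x" by (simp add: comp[symmetric])
  thus "a (inv \<pi> \<circ> \<sigma> \<circ> \<pi>) x = x" using permutes_inv_o(2)[OF \<pi>] x by simp
next
  assume "a (inv \<pi> \<circ> \<sigma> \<circ> \<pi>) x = x"
  hence "a (\<pi> \<circ> inv \<pi> \<circ> \<sigma> \<circ> \<pi>) x = a \<pi> x" by (simp add: comp[symmetric] o_assoc)
  thus "a \<sigma> (a \<pi> x) = a \<pi> x" using permutes_inv_o(1)[OF \<pi>] by (simp add: comp)
qed

text \<open>Double counting of the permutations \<open>\<pi>\<close> with \<open>a \<sigma> (a \<pi> x) = a \<pi> x\<close>: grouped by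
  the orbit point \<open>a \<pi> x\<close>, and by the conjugate \<open>inv \<pi> \<circ> \<sigma> \<circ> \<pi>\<close>, which lies in the stabiliser.\<close>

theorem card_fixed_points_orbit:
  fixes a :: "(nat \<Rightarrow> nat) \<Rightarrow> 'x \<Rightarrow> 'x"
  assumes comp: "\<And>\<pi> \<rho> y. a \<pi> (a \<rho> y) = a (\<pi> \<circ> \<rho>) y" and x: "a id x = x"
    and \<sigma>: "\<sigma> permutes {1..n}"
  defines "Stab \<equiv> {\<pi>. \<pi> permutes {1..n} \<and> a \<pi> x = x}"
  shows "card {y \<in> {a \<pi> x | \<pi>. \<pi> permutes {1..n}}. a \<sigma> y = y} * card Stab
       = zee (cycle_type n \<sigma>) * card {g \<in> Stab. cycle_type n g = cycle_type n \<sigma>}"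
proof -
  let ?N = "{1..n}"
  let ?Fix = "{y \<in> {a \<pi> x | \<pi>. \<pi> permutes ?N}. a \<sigma> y = y}"
  let ?P = "{\<pi>. \<pi> permutes ?N \<and> a \<sigma> (a \<pi> x) = a \<pi> x}"
  have finP: "finite ?P" by (rule finite_subset[OF _ finite_permutations[of ?N]]) auto
  have finFix: "finite ?Fix"
    by (rule finite_subset[OF _ finite_imageI[OF finite_permutations[of ?N]]]) auto
  have "(\<lambda>\<pi>. a \<pi> x) ` ?P \<subseteq> ?Fix" by auto
  hence "card ?P = (\<Sum>y\<in>?Fix. card {\<pi> \<in> ?P. a \<pi> x = y})"
    using sum.group[OF finP finFix, of "\<lambda>\<pi>. a \<pi> x" "\<lambda>_. 1 :: nat"] by simp
  also have "\<dots> = (\<Sum>y\<in>?Fix. card Stab)"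
  proof (rule sum.cong[OF refl])
    fix y assume "y \<in> ?Fix"
    then obtain \<pi>0 where \<pi>0: "\<pi>0 permutes ?N" "y = a \<pi>0 x" "a \<sigma> y = y" by auto
    hence "{\<pi> \<in> ?P. a \<pi> x = y} = {\<pi>. \<pi> permutes ?N \<and> a \<pi> x = a \<pi>0 x}" by auto
    thus "card {\<pi> \<in> ?P. a \<pi> x = y} = card Stab"
      unfolding Stab_def using card_transporters[OF comp x \<pi>0(1)] by simp
  qed
  also have "?P = {\<pi>. \<pi> permutes ?N \<and> inv \<pi> \<circ> \<sigma> \<circ> \<pi> \<in> Stab}"
    unfolding Stab_def using fixed_iff_conjugate_stabilises[OF comp x]
      permutes_compose[OF _ permutes_compose[OF \<sigma> permutes_inv]] by blast
  also have "card \<dots> = zee (cycle_type n \<sigma>) * card {g \<in> Stab. cycle_type n g = cycle_type n \<sigma>}"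
    by (rule card_conjugacy_preimage[OF _ \<sigma>]) (auto simp: Stab_def)
  finally show ?thesis by (simp add: mult.commute)
qed

section \<open>Coefficients of the cycle index series\<close>

lemma Cser_eq:
  assumes "\<mu> \<in> partitions n"
  shows "Cser \<mu> \<nu> = of_nat (card {g \<in> cyc_group (sigma \<mu>). cycle_type n g = \<nu>})
    / of_nat (card (cyc_group (sigma \<mu>)))"
  using assms unfolding Cser_def cgroup_eq_cyc_group partitions_def by simp

lemma Cser_eq_0:
  assumes "\<mu> \<in> partitions n" "\<nexists>\<sigma>. \<sigma> permutes {1..n} \<and> cycle_type n \<sigma> = \<nu>"
  shows "Cser \<mu> \<nu> = 0"
proof -
  have "{g \<in> cyc_group (sigma \<mu>). cycle_type n g = \<nu>} = {}"
    using assms(2) cyc_group_permutes[OF sigma_permutes[OF assms(1)]] by blast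
  thus ?thesis unfolding Cser_eq[OF assms(1)] by (simp only: card.empty of_nat_0 div_0)
qed

lemma conjg_restrict_id:
  assumes "h permutes {1..n}"
  shows "conjg n {1..n} (restrict id {1..n}) h = h"
proof -
  have b: "bij_betw (restrict id {1..n}) {1..n} {1..n}" by (auto simp: bij_betw_def inj_on_def)
  have "conjg n {1..n} (restrict id {1..n}) h = map_permutation {1..n} id h"
    unfolding conjg_eq_map_permutation[OF b]
    by (intro map_permutation_cong[OF _ assms]) (auto simp: bij_betw_def)
  thus ?thesis using assms by simp
qed

lemma Cspec_orbit:
  assumes "\<alpha> \<in> partitions n"
  defines "s0 \<equiv> coset (restrict id {1..n}) (cyc_group (sigma \<alpha>))"
  shows "s0 \<in> Cspec \<alpha> {1..n}"
    and "Cspec \<alpha> {1..n} = {act n \<pi> s0 | \<pi>. \<pi> permutes {1..n}}"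
    and "{\<pi>. \<pi> permutes {1..n} \<and> act n \<pi> s0 = s0} = cyc_group (sigma \<alpha>)"
proof -
  let ?N = "{1..n}" and ?H = "cyc_group (sigma \<alpha>)"
  have sp: "sigma \<alpha> permutes ?N" using sigma_permutes[OF assms(1)] .
  have H: "\<forall>h\<in>?H. h permutes ?N" using cyc_group_permutes[OF sp] by blast
  have idb: "restrict id ?N \<in> bijs n ?N" unfolding bijs_def by (auto simp: bij_betw_def inj_on_def)
  show s0: "s0 \<in> Cspec \<alpha> ?N"
    unfolding s0_def Cspec_def Xquot_def cgroup_eq_cyc_group using idb assms(1)
    by (auto simp: partitions_def)
  show "Cspec \<alpha> ?N = {act n \<pi> s0 | \<pi>. \<pi> permutes ?N}"
  proof (intro equalityI subsetI)
    fix s assume "s \<in> Cspec \<alpha> ?N"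
    then obtain l where l: "l \<in> bijs n ?N" "s = coset l ?H" using Cspec_cases[OF _ assms(1)] by blast
    have lb: "bij_betw l ?N ?N" and le: "l \<in> extensional ?N" using l(1) unfolding bijs_def by auto
    define \<pi> where "\<pi> x = (if x \<in> ?N then l x else x)" for x
    have "bij_betw \<pi> ?N ?N" using lb by (rule bij_betw_cong[THEN iffD1, rotated]) (simp add: \<pi>_def)
    hence \<pi>: "\<pi> permutes ?N" by (rule bij_imp_permutes) (auto simp: \<pi>_def)
    have "act n \<pi> s0 = coset (restrict (\<pi> \<circ> restrict id ?N) ?N) ?H"
      unfolding s0_def by (rule act_coset[OF restrict_extensional H])
    also have "restrict (\<pi> \<circ> restrict id ?N) ?N = l"
      using le by (auto simp: fun_eq_iff \<pi>_def extensional_def)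
    finally have "act n \<pi> s0 = s" using l(2) by simp
    thus "s \<in> {act n \<pi> s0 | \<pi>. \<pi> permutes ?N}" using \<pi> by auto
  next
    fix s assume "s \<in> {act n \<pi> s0 | \<pi>. \<pi> permutes ?N}"
    thus "s \<in> Cspec \<alpha> ?N"
      using Cspec_transport(1)[OF s0 assms(1) permutes_imp_bij] by blast
  qed
  have "{\<pi>. \<pi> permutes ?N \<and> act n \<pi> s0 = s0} = conjg n ?N (restrict id ?N) ` ?H"
    unfolding s0_def Aut_coset[OF idb sp, symmetric] Aut_def ..
  also have "\<dots> = ?H" using conjg_restrict_id H by (auto simp: image_iff)
  finally show "{\<pi>. \<pi> permutes ?N \<and> act n \<pi> s0 = s0} = ?H" .
qed

theorem Cser_fixed_points:
  assumes "\<alpha> \<in> partitions n" "\<sigma> permutes {1..n}"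
  shows "Cser \<alpha> (cycle_type n \<sigma>) =
    of_nat (card {s \<in> Cspec \<alpha> {1..n}. act n \<sigma> s = s}) / of_nat (zee (cycle_type n \<sigma>))"
proof -
  note s0 = Cspec_orbit[OF assms(1)]
  have "card {s \<in> Cspec \<alpha> {1..n}. act n \<sigma> s = s} * card (cyc_group (sigma \<alpha>))
      = zee (cycle_type n \<sigma>) * card {g \<in> cyc_group (sigma \<alpha>). cycle_type n g = cycle_type n \<sigma>}"
    using card_fixed_points_orbit[OF act_comp act_id_Cspec[OF s0(1) assms(1)] assms(2)]
    unfolding s0(2)[symmetric] s0(3) .
  hence "(of_nat (card {s \<in> Cspec \<alpha> {1..n}. act n \<sigma> s = s}) :: rat)
      * of_nat (card (cyc_group (sigma \<alpha>))) = of_nat (zee (cycle_type n \<sigma>))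
      * of_nat (card {g \<in> cyc_group (sigma \<alpha>). cycle_type n g = cycle_type n \<sigma>})"
    by (simp only: of_nat_mult[symmetric])
  thus ?thesis
    unfolding Cser_eq[OF assms(1)]
    using zee_cycle_type_pos[OF assms(2)] card_cyc_group_pos[OF sigma_permutes[OF assms(1)]]
    by (simp add: frac_eq_eq ac_simps)
qed

lemma Cser_diagonal_nonzero:
  assumes "\<mu> \<in> partitions n"
  shows "Cser \<mu> \<mu> \<noteq> 0"
proof -
  have sp: "sigma \<mu> permutes {1..n}" using sigma_permutes[OF assms] .
  have "sigma \<mu> \<in> {g \<in> cyc_group (sigma \<mu>). cycle_type n g = \<mu>}"
    using self_in_cyc_group cycle_type_sigma[OF assms] by simp
  hence "card {g \<in> cyc_group (sigma \<mu>). cycle_type n g = \<mu>} > 0"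
    using finite_cyc_group[OF _ sp] by (auto simp: card_gt_0_iff)
  thus ?thesis unfolding Cser_eq[OF assms] using card_cyc_group_pos[OF sp] by simp
qed

lemma Cser_nonzero_imp_size_le:
  assumes "\<mu> \<in> partitions n" "Cser \<mu> \<nu> \<noteq> 0"
  shows "size \<mu> \<le> size \<nu>" and "size \<mu> = size \<nu> \<Longrightarrow> \<nu> = \<mu>"
proof -
  obtain g where g: "g \<in> cyc_group (sigma \<mu>)" "cycle_type n g = \<nu>"
    using assms(2) unfolding Cser_eq[OF assms(1)] by (auto simp: card_eq_0_iff)
  note power = cycle_type_power[OF sigma_permutes[OF assms(1)] g(1)]
  show "size \<mu> \<le> size \<nu>" using power(1) g(2) cycle_type_sigma[OF assms(1)] by simp
  show "size \<mu> = size \<nu> \<Longrightarrow> \<nu> = \<mu>" using power(2) g(2) cycle_type_sigma[OF assms(1)] by simp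
qed

theorem Cser_linear_independent:
  fixes c :: "nat multiset \<Rightarrow> rat"
  assumes "\<And>\<nu>. (\<Sum>\<mu>\<in>partitions n. c \<mu> * Cser \<mu> \<nu>) = 0" "\<mu> \<in> partitions n"
  shows "c \<mu> = 0"
proof (rule ccontr)
  define Z where "Z = {\<mu> \<in> partitions n. c \<mu> \<noteq> 0}"
  assume "c \<mu> \<noteq> 0"
  hence "Z \<noteq> {}" using assms(2) unfolding Z_def by auto
  moreover have "finite Z" unfolding Z_def using finite_partitions by simp
  ultimately obtain \<mu>0 where \<mu>0: "\<mu>0 \<in> Z" "\<And>\<mu>. \<mu> \<in> Z \<Longrightarrow> size \<mu>0 \<le> size \<mu>"
    using arg_min_if_finite(1,2)[of Z size] by (metis not_le)
  have p0: "\<mu>0 \<in> partitions n" using \<mu>0(1) unfolding Z_def by auto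
  have others: "c \<mu> * Cser \<mu> \<mu>0 = 0" if "\<mu> \<in> partitions n - {\<mu>0}" for \<mu>
  proof (rule ccontr)
    assume "c \<mu> * Cser \<mu> \<mu>0 \<noteq> 0"
    hence "\<mu> \<in> Z" "Cser \<mu> \<mu>0 \<noteq> 0" using that unfolding Z_def by auto
    thus False using Cser_nonzero_imp_size_le[of \<mu> n \<mu>0] \<mu>0(2) that by force
  qed
  have "(\<Sum>\<mu>\<in>partitions n. c \<mu> * Cser \<mu> \<mu>0)
      = c \<mu>0 * Cser \<mu>0 \<mu>0 + (\<Sum>\<mu>\<in>partitions n - {\<mu>0}. c \<mu> * Cser \<mu> \<mu>0)"
    by (rule sum.remove[OF finite_partitions p0])
  also have "(\<Sum>\<mu>\<in>partitions n - {\<mu>0}. c \<mu> * Cser \<mu> \<mu>0) = 0"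
    using others by (intro sum.neutral) blast
  finally have "c \<mu>0 * Cser \<mu>0 \<mu>0 = 0" using assms(1) by simp
  thus False using \<mu>0(1) Cser_diagonal_nonzero[OF p0] unfolding Z_def by simp
qed

lemma conjg_conjugator:
  assumes "f \<in> conjugators {1..n} {1..n} g s" "s permutes {1..n}"
  shows "conjg n {1..n} f g = s"
proof
  fix y
  have fb: "bij_betw f {1..n} {1..n}" and fc: "\<forall>x\<in>{1..n}. f (g x) = s (f x)"
    using assms(1) unfolding conjugators_def by auto
  show "conjg n {1..n} f g y = s y"
  proof (cases "y \<in> {1..n}")
    case True
    then obtain x where x: "x \<in> {1..n}" "y = f x" using fb unfolding bij_betw_def by blast
    hence "inv_into {1..n} f y = x" using fb by (simp add: bij_betw_def inv_into_f_f)
    thus ?thesis using True x fc unfolding conjg_def by simp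
  next
    case False
    thus ?thesis using permutes_not_in[OF assms(2) False] unfolding conjg_def if_not_P[OF False]
      by simp
  qed
qed

lemma iso_sub_cyc_group:
  assumes "d permutes {1..n}"
  shows "iso_sub n {1..n} (cyc_group d) (cgroup (cycle_type n d))"
proof -
  let ?N = "{1..n}" and ?\<mu> = "cycle_type n d"
  have \<mu>: "?\<mu> \<in> partitions n" using cycle_type_in_partitions[OF assms] .
  have s: "sigma ?\<mu> permutes ?N" using sigma_permutes[OF \<mu>] .
  have "card (conjugators ?N ?N (sigma ?\<mu>) d) = zee ?\<mu>"
    using card_conjugators[of ?N "sigma ?\<mu>" ?N d] cycle_type_sigma[OF \<mu>]
      permutes_imp_permutation[OF _ s] permutes_imp_permutation[OF _ assms]
      permutes_image[OF s] permutes_image[OF assms]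
    by (simp add: cycle_type_eq_on)
  moreover have "zee ?\<mu> > 0" using zee_cycle_type_pos[OF assms] .
  ultimately obtain f where f: "f \<in> conjugators ?N ?N (sigma ?\<mu>) d"
    by (metis card.empty ex_in_conv less_irrefl)
  have fb: "bij_betw f ?N ?N" using f unfolding conjugators_def by auto
  have "conjg n ?N f ` cgroup ?\<mu> = cyc_group (conjg n ?N f (sigma ?\<mu>))"
    unfolding cgroup_eq_cyc_group conjg_eq_map_permutation[OF fb]
    using map_permutation_cyc_group[OF bij_betw_imp_inj_on[OF fb] s] .
  thus ?thesis unfolding iso_sub_def conjg_conjugator[OF f assms] using fb by metis
qed

lemma iso_sub_cgroupE:
  assumes "\<mu> \<in> partitions n" "iso_sub n {1..n} L (cgroup \<mu>)"
  obtains c where "c permutes {1..n}" "cycle_type n c = \<mu>" "L = cyc_group c"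
proof -
  let ?N = "{1..n}"
  obtain f where f: "bij_betw f ?N ?N" "L = conjg n ?N f ` cgroup \<mu>"
    using assms(2) unfolding iso_sub_def by blast
  let ?c = "map_permutation ?N f (sigma \<mu>)"
  have s: "sigma \<mu> permutes ?N" using sigma_permutes[OF assms(1)] .
  have "L = cyc_group (?c)"
    unfolding f(2) cgroup_eq_cyc_group conjg_eq_map_permutation[OF f(1)]
    using map_permutation_cyc_group[OF bij_betw_imp_inj_on[OF f(1)] s] .
  moreover have "cycle_type n (?c) = \<mu>"
    using cycle_type_conjg[OF f(1) s] cycle_type_sigma[OF assms(1)]
    unfolding conjg_eq_map_permutation[OF f(1)] by simp
  moreover have "?c permutes ?N" using map_permutation_permutes[OF f(1) s] .
  ultimately show ?thesis using that by blast
qed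

lemma iso_sub_cgroup_unique:
  assumes "\<mu> \<in> partitions n" "\<mu>' \<in> partitions n"
    "iso_sub n {1..n} L (cgroup \<mu>)" "iso_sub n {1..n} L (cgroup \<mu>')"
  shows "\<mu> = \<mu>'"
proof -
  obtain c where c: "c permutes {1..n}" "cycle_type n c = \<mu>" "L = cyc_group c"
    using iso_sub_cgroupE[OF assms(1,3)] .
  obtain c' where c': "c' permutes {1..n}" "cycle_type n c' = \<mu>'" "L = cyc_group c'"
    using iso_sub_cgroupE[OF assms(2,4)] .
  have "c' \<in> cyc_group c" "c \<in> cyc_group c'" using c(3) c'(3) self_in_cyc_group by auto
  thus ?thesis
    using cycle_type_power[OF c(1)] cycle_type_power[OF c'(1)] c(2) c'(2) le_antisym by metis
qed

lemma Aut_Int_iso_sub: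
  assumes \<alpha>: "\<alpha> \<in> partitions n" and \<beta>: "\<beta> \<in> partitions n"
    and s: "s \<in> Cspec \<alpha> {1..n}" and t: "t \<in> Cspec \<beta> {1..n}"
  obtains \<mu> where "\<mu> \<in> partitions n"
    "iso_sub n {1..n} (Aut n {1..n} s \<inter> Aut n {1..n} t) (cgroup \<mu>)"
proof -
  let ?N = "{1..n}" and ?L = "Aut n {1..n} s \<inter> Aut n {1..n} t"
  obtain l where l: "l \<in> bijs n ?N" "s = coset l (cyc_group (sigma \<alpha>))"
    using Cspec_cases[OF s \<alpha>] .
  have lb: "bij_betw l ?N ?N" using l(1) unfolding bijs_def by auto
  have sp: "sigma \<alpha> permutes ?N" using sigma_permutes[OF \<alpha>] .
  let ?c = "map_permutation ?N l (sigma \<alpha>)"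
  have "?c permutes ?N" using map_permutation_permutes[OF lb sp] .
  hence c: "permutation ?c" using permutes_imp_permutation by blast
  have "Aut n ?N s = cyc_group ?c"
    unfolding l(2) Aut_coset[OF l(1) sp] conjg_eq_map_permutation[OF lb]
    using map_permutation_cyc_group[OF bij_betw_imp_inj_on[OF lb] sp] .
  moreover have "id \<in> ?L" using act_id_Cspec[OF s \<alpha>] act_id_Cspec[OF t \<beta>] by (simp add: Aut_def)
  moreover have "g \<circ> h \<in> ?L" if "g \<in> ?L" "h \<in> ?L" for g h
    using that unfolding Aut_def by (auto simp: act_comp[symmetric] intro: permutes_compose)
  ultimately obtain d where d: "d \<in> ?L" "?L = cyc_group d"
    using subgroup_cyc_group[OF c, of ?L] by blast
  have "d permutes ?N" using d(1) unfolding Aut_def by auto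
  thus ?thesis
    using that cycle_type_in_partitions iso_sub_cyc_group d(2) by metis
qed

section \<open>Orbits of pairs and the Kronecker product\<close>

definition act_pair :: "nat \<Rightarrow> (nat \<Rightarrow> nat) \<Rightarrow> (nat \<Rightarrow> nat) set \<times> (nat \<Rightarrow> nat) set
    \<Rightarrow> (nat \<Rightarrow> nat) set \<times> (nat \<Rightarrow> nat) set" where
  "act_pair n \<pi> st = (act n \<pi> (fst st), act n \<pi> (snd st))"

definition pair_orbit :: "nat \<Rightarrow> (nat \<Rightarrow> nat) set \<times> (nat \<Rightarrow> nat) set
    \<Rightarrow> ((nat \<Rightarrow> nat) set \<times> (nat \<Rightarrow> nat) set) set" where
  "pair_orbit n st = {act_pair n \<pi> st | \<pi>. \<pi> permutes {1..n}}"

lemma act_pair_comp: "act_pair n \<pi> (act_pair n \<rho> st) = act_pair n (\<pi> \<circ> \<rho>) st"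
  unfolding act_pair_def by (simp add: act_comp)

lemma num_types_eq:
  assumes "\<alpha> \<in> partitions n"
  shows "num_types \<alpha> \<beta> \<mu> = card (pair_orbit n ` Cmu \<alpha> \<beta> \<mu> {1..n})"
proof -
  have "(\<lambda>(s, t). {(act n \<pi> s, act n \<pi> t) | \<pi>. \<pi> permutes {1..n}}) = pair_orbit n"
    by (auto simp: fun_eq_iff pair_orbit_def act_pair_def)
  thus ?thesis using assms unfolding num_types_def partitions_def by simp
qed

context
  fixes n :: nat and \<alpha> \<beta> :: "nat multiset"
  assumes \<alpha>: "\<alpha> \<in> partitions n" and \<beta>: "\<beta> \<in> partitions n"
begin

abbreviation Cpairs :: "((nat \<Rightarrow> nat) set \<times> (nat \<Rightarrow> nat) set) set" where
  "Cpairs \<equiv> Cspec \<alpha> {1..n} \<times> Cspec \<beta> {1..n}"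

lemma act_pair_id: "st \<in> Cpairs \<Longrightarrow> act_pair n id st = st"
  using act_id_Cspec[OF _ \<alpha>, where U = "{1..n}"] act_id_Cspec[OF _ \<beta>, where U = "{1..n}"]
  by (simp add: act_pair_def mem_Times_iff)

lemma act_pair_Cpairs: "st \<in> Cpairs \<Longrightarrow> \<pi> permutes {1..n} \<Longrightarrow> act_pair n \<pi> st \<in> Cpairs"
  using Cspec_transport(1)[OF _ \<alpha> permutes_imp_bij] Cspec_transport(1)[OF _ \<beta> permutes_imp_bij]
  by (auto simp: act_pair_def)

lemma pair_orbit_subset: "st \<in> Cpairs \<Longrightarrow> pair_orbit n st \<subseteq> Cpairs"
  unfolding pair_orbit_def using act_pair_Cpairs by blast

lemma pair_orbit_self:
  assumes "st \<in> Cpairs"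
  shows "st \<in> pair_orbit n st"
proof -
  have "st = act_pair n id st" using act_pair_id[OF assms] by simp
  thus ?thesis unfolding pair_orbit_def using permutes_id by blast
qed

lemma pair_orbit_eq:
  assumes "st \<in> Cpairs" "st' \<in> pair_orbit n st"
  shows "pair_orbit n st' = pair_orbit n st"
proof -
  obtain \<pi>0 where \<pi>0: "\<pi>0 permutes {1..n}" "st' = act_pair n \<pi>0 st"
    using assms(2) unfolding pair_orbit_def by blast
  have "act_pair n \<pi> st' = act_pair n (\<pi> \<circ> \<pi>0) st" for \<pi> by (simp add: \<pi>0(2) act_pair_comp)
  moreover have "act_pair n \<pi> st = act_pair n (\<pi> \<circ> inv \<pi>0) st'" for \<pi>
    using permutes_inv_o(2)[OF \<pi>0(1)] by (simp add: \<pi>0(2) act_pair_comp comp_assoc)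
  ultimately show ?thesis unfolding pair_orbit_def
    using \<pi>0(1) permutes_compose permutes_inv by blast
qed

lemma pair_orbits_disjoint:
  assumes "Q \<in> pair_orbit n ` Cpairs" "Q' \<in> pair_orbit n ` Cpairs" "Q \<noteq> Q'"
  shows "Q \<inter> Q' = {}"
proof -
  obtain st st' where st: "st \<in> Cpairs" "Q = pair_orbit n st" "st' \<in> Cpairs" "Q' = pair_orbit n st'"
    using assms(1,2) by blast
  have "Q = Q'" if "y \<in> Q" "y \<in> Q'" for y
    using pair_orbit_eq[OF st(1), of y] pair_orbit_eq[OF st(3), of y] that st(2,4) by simp
  thus ?thesis using assms(3) by blast
qed

lemma finite_Cpairs: "finite Cpairs"
  using Cspec_orbit(2)[OF \<alpha>] Cspec_orbit(2)[OF \<beta>] finite_permutations[of "{1..n}"]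
  by (simp add: setcompr_eq_image)

lemma act_pair_Cmu:
  "st \<in> Cmu \<alpha> \<beta> \<mu> {1..n} \<Longrightarrow> \<pi> permutes {1..n} \<Longrightarrow> act_pair n \<pi> st \<in> Cmu \<alpha> \<beta> \<mu> {1..n}"
  using Cmu_transport[OF \<alpha> \<beta> permutes_imp_bij] by (cases st) (auto simp: act_pair_def)

lemma Cmu_iso_sub:
  "(s, t) \<in> Cmu \<alpha> \<beta> \<mu> {1..n} \<Longrightarrow>
    iso_sub n {1..n} (Aut n {1..n} s \<inter> Aut n {1..n} t) (cgroup \<mu>)"
  using \<alpha> unfolding Cmu_def partitions_def by auto

lemma stabiliser_act_pair:
  "{\<pi>. \<pi> permutes {1..n} \<and> act_pair n \<pi> (s, t) = (s, t)} = Aut n {1..n} s \<inter> Aut n {1..n} t"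
  unfolding Aut_def act_pair_def by auto

lemma pair_orbits_Cmu_disjoint:
  assumes "\<mu> \<in> partitions n" "\<mu>' \<in> partitions n" "\<mu> \<noteq> \<mu>'"
  shows "pair_orbit n ` Cmu \<alpha> \<beta> \<mu> {1..n} \<inter> pair_orbit n ` Cmu \<alpha> \<beta> \<mu>' {1..n} = {}"
proof (rule ccontr)
  assume "\<not> ?thesis"
  then obtain st st' where st: "st \<in> Cmu \<alpha> \<beta> \<mu> {1..n}" "st' \<in> Cmu \<alpha> \<beta> \<mu>' {1..n}"
    "pair_orbit n st = pair_orbit n st'" by blast
  hence "st \<in> pair_orbit n st'" using pair_orbit_self Cmu_subset_Cspec by blast
  then obtain \<pi> where "\<pi> permutes {1..n}" "st = act_pair n \<pi> st'" unfolding pair_orbit_def by blast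
  hence "st \<in> Cmu \<alpha> \<beta> \<mu>' {1..n}" using act_pair_Cmu[OF st(2)] by simp
  thus False
    using st(1) Cmu_iso_sub iso_sub_cgroup_unique[OF assms(1,2)] assms(3) by (cases st) blast
qed

lemma pair_orbits_eq_UN:
  "pair_orbit n ` Cpairs = (\<Union>\<mu>\<in>partitions n. pair_orbit n ` Cmu \<alpha> \<beta> \<mu> {1..n})"
proof (intro equalityI subsetI)
  fix Q assume "Q \<in> pair_orbit n ` Cpairs"
  then obtain s t where st: "(s, t) \<in> Cpairs" "Q = pair_orbit n (s, t)" by force
  obtain \<mu> where "\<mu> \<in> partitions n"
    "iso_sub n {1..n} (Aut n {1..n} s \<inter> Aut n {1..n} t) (cgroup \<mu>)"
    using Aut_Int_iso_sub[OF \<alpha> \<beta>] st(1) by blast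
  hence "(s, t) \<in> Cmu \<alpha> \<beta> \<mu> {1..n}" "\<mu> \<in> partitions n"
    using st(1) \<alpha> unfolding Cmu_def partitions_def by auto
  thus "Q \<in> (\<Union>\<mu>\<in>partitions n. pair_orbit n ` Cmu \<alpha> \<beta> \<mu> {1..n})" using st(2) by blast
qed (use Cmu_subset_Cspec in blast)

lemma card_fixed_points_pair_orbit:
  assumes st: "st \<in> Cmu \<alpha> \<beta> \<mu> {1..n}" and \<mu>: "\<mu> \<in> partitions n"
    and \<sigma>: "\<sigma> permutes {1..n}"
  shows "of_nat (card {y \<in> pair_orbit n st. act_pair n \<sigma> y = y})
    = (of_nat (zee (cycle_type n \<sigma>)) * Cser \<mu> (cycle_type n \<sigma>) :: rat)"
proof -
  obtain s t where st_eq: "st = (s, t)" by (cases st)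
  let ?L = "Aut n {1..n} s \<inter> Aut n {1..n} t" and ?H = "cyc_group (sigma \<mu>)"
  have fix_eq: "card {y \<in> pair_orbit n st. act_pair n \<sigma> y = y} * card ?L
      = zee (cycle_type n \<sigma>) * card {g \<in> ?L. cycle_type n g = cycle_type n \<sigma>}"
    using card_fixed_points_orbit[OF act_pair_comp act_pair_id[OF subsetD[OF Cmu_subset_Cspec st]] \<sigma>]
    unfolding pair_orbit_def[symmetric] st_eq stabiliser_act_pair .
  obtain f where f: "bij_betw f {1..n} {1..n}" "?L = conjg n {1..n} f ` ?H"
    using Cmu_iso_sub st unfolding st_eq iso_sub_def cgroup_eq_cyc_group by blast
  have H: "?H \<subseteq> {\<pi>. \<pi> permutes {1..n}}"
    using cyc_group_permutes[OF sigma_permutes[OF \<mu>]] by blast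
  have inj: "inj_on (conjg n {1..n} f) ?H"
    using inj_on_subset[OF inj_on_map_permutation[OF f(1)] H]
    unfolding conjg_eq_map_permutation[OF f(1)] .
  have "{g \<in> conjg n {1..n} f ` ?H. cycle_type n g = cycle_type n \<sigma>}
      = conjg n {1..n} f ` {g \<in> ?H. cycle_type n g = cycle_type n \<sigma>}"
    using cycle_type_conjg[OF f(1)] H by auto
  hence "card {g \<in> conjg n {1..n} f ` ?H. cycle_type n g = cycle_type n \<sigma>}
      = card {g \<in> ?H. cycle_type n g = cycle_type n \<sigma>}"
    using card_image[OF inj_on_subset[OF inj]] by simp
  hence "card {y \<in> pair_orbit n st. act_pair n \<sigma> y = y} * card ?H
      = zee (cycle_type n \<sigma>) * card {g \<in> ?H. cycle_type n g = cycle_type n \<sigma>}"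
    using fix_eq unfolding f(2) card_image[OF inj] by simp
  hence "(of_nat (card {y \<in> pair_orbit n st. act_pair n \<sigma> y = y}) :: rat) * of_nat (card ?H)
      = of_nat (zee (cycle_type n \<sigma>)) * of_nat (card {g \<in> ?H. cycle_type n g = cycle_type n \<sigma>})"
    by (simp only: of_nat_mult[symmetric])
  thus ?thesis
    unfolding Cser_eq[OF \<mu>] using card_cyc_group_pos[OF sigma_permutes[OF \<mu>]]
    by (simp add: field_simps)
qed


lemma card_fixed_points_Cpairs:
  assumes \<sigma>: "\<sigma> permutes {1..n}"
  shows "of_nat (card {y \<in> Cpairs. act_pair n \<sigma> y = y}) = (of_nat (zee (cycle_type n \<sigma>)) *
    (\<Sum>\<mu>\<in>partitions n. of_nat (num_types \<alpha> \<beta> \<mu>) * Cser \<mu> (cycle_type n \<sigma>)) :: rat)"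
proof -
  let ?fix = "\<lambda>Q. {y \<in> Q. act_pair n \<sigma> y = y}" and ?T = "\<lambda>\<mu>. pair_orbit n ` Cmu \<alpha> \<beta> \<mu> {1..n}"
  have fin: "finite (?fix Q)" if "Q \<in> pair_orbit n ` Cpairs" for Q
    using that finite_subset[OF pair_orbit_subset finite_Cpairs] by auto
  have "{y \<in> Cpairs. act_pair n \<sigma> y = y} = (\<Union>Q \<in> pair_orbit n ` Cpairs. ?fix Q)"
  proof (intro equalityI subsetI)
    fix y assume "y \<in> {y \<in> Cpairs. act_pair n \<sigma> y = y}"
    thus "y \<in> (\<Union>Q \<in> pair_orbit n ` Cpairs. ?fix Q)" using pair_orbit_self[of y] by blast
  next
    fix y assume "y \<in> (\<Union>Q \<in> pair_orbit n ` Cpairs. ?fix Q)"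
    then obtain st where "st \<in> Cpairs" "y \<in> pair_orbit n st" "act_pair n \<sigma> y = y" by blast
    thus "y \<in> {y \<in> Cpairs. act_pair n \<sigma> y = y}" using pair_orbit_subset by blast
  qed
  hence "card {y \<in> Cpairs. act_pair n \<sigma> y = y} = card (\<Union>Q \<in> pair_orbit n ` Cpairs. ?fix Q)"
    by (rule arg_cong)
  also have "\<dots> = (\<Sum>Q \<in> pair_orbit n ` Cpairs. card (?fix Q))"
  proof (rule card_UN_disjoint)
    show "finite (pair_orbit n ` Cpairs)" using finite_Cpairs by simp
    show "\<forall>Q\<in>pair_orbit n ` Cpairs. \<forall>Q'\<in>pair_orbit n ` Cpairs. Q \<noteq> Q' \<longrightarrow> ?fix Q \<inter> ?fix Q' = {}"
      using pair_orbits_disjoint by blast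
  qed (use fin in blast)
  also have "\<dots> = (\<Sum>\<mu>\<in>partitions n. \<Sum>Q \<in> ?T \<mu>. card (?fix Q))"
    unfolding pair_orbits_eq_UN
    using finite_partitions finite_subset[OF Cmu_subset_Cspec finite_Cpairs] pair_orbits_Cmu_disjoint
    by (intro sum.UNION_disjoint) auto
  finally have "(of_nat (card {y \<in> Cpairs. act_pair n \<sigma> y = y}) :: rat)
      = (\<Sum>\<mu>\<in>partitions n. \<Sum>Q \<in> ?T \<mu>. of_nat (card (?fix Q)))" by simp
  also have "\<dots> = (\<Sum>\<mu>\<in>partitions n. \<Sum>Q \<in> ?T \<mu>.
      of_nat (zee (cycle_type n \<sigma>)) * Cser \<mu> (cycle_type n \<sigma>))"
    using card_fixed_points_pair_orbit[OF _ _ \<sigma>] by (intro sum.cong refl) auto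
  also have "\<dots> = (\<Sum>\<mu>\<in>partitions n.
      of_nat (num_types \<alpha> \<beta> \<mu>) * (of_nat (zee (cycle_type n \<sigma>)) * Cser \<mu> (cycle_type n \<sigma>)))"
    unfolding num_types_eq[OF \<alpha>] by simp
  finally show ?thesis by (simp add: sum_distrib_left algebra_simps)
qed

theorem kron_Cser:
  "kron (Cser \<alpha>) (Cser \<beta>) = (\<lambda>\<nu>. \<Sum>\<mu>\<in>partitions n. of_nat (num_types \<alpha> \<beta> \<mu>) * Cser \<mu> \<nu>)"
proof
  fix \<nu>
  show "kron (Cser \<alpha>) (Cser \<beta>) \<nu> = (\<Sum>\<mu>\<in>partitions n. of_nat (num_types \<alpha> \<beta> \<mu>) * Cser \<mu> \<nu>)"
  proof (cases "\<exists>\<sigma>. \<sigma> permutes {1..n} \<and> cycle_type n \<sigma> = \<nu>")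
    case False
    thus ?thesis unfolding kron_def using Cser_eq_0[OF _ False] \<alpha> by simp
  next
    case True
    then obtain \<sigma> where \<sigma>: "\<sigma> permutes {1..n}" and \<nu>: "cycle_type n \<sigma> = \<nu>" by blast
    let ?Fa = "{s \<in> Cspec \<alpha> {1..n}. act n \<sigma> s = s}" and ?Fb = "{t \<in> Cspec \<beta> {1..n}. act n \<sigma> t = t}"
    have z: "zee \<nu> > 0" using zee_cycle_type_pos[OF \<sigma>] \<nu> by simp
    have "{y \<in> Cpairs. act_pair n \<sigma> y = y} = ?Fa \<times> ?Fb" by (auto simp: act_pair_def)
    hence "(of_nat (card ?Fa) :: rat) * of_nat (card ?Fb)
        = of_nat (zee \<nu>) * (\<Sum>\<mu>\<in>partitions n. of_nat (num_types \<alpha> \<beta> \<mu>) * Cser \<mu> \<nu>)"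
      using card_fixed_points_Cpairs[OF \<sigma>] \<nu> by (simp add: card_cartesian_product)
    moreover have "kron (Cser \<alpha>) (Cser \<beta>) \<nu> = of_nat (card ?Fa) * of_nat (card ?Fb) / of_nat (zee \<nu>)"
      unfolding kron_def using Cser_fixed_points[OF \<alpha> \<sigma>] Cser_fixed_points[OF \<beta> \<sigma>] \<nu> z
      by simp
    ultimately show ?thesis using z by simp
  qed
qed


lemma kron_Cser_coefficients_unique:
  assumes b: "kron (Cser \<alpha>) (Cser \<beta>) = (\<lambda>\<nu>. \<Sum>\<mu>\<in>partitions n. b \<mu> * Cser \<mu> \<nu>)"
    and \<mu>: "\<mu> \<in> partitions n"
  shows "b \<mu> = of_nat (num_types \<alpha> \<beta> \<mu>)"
proof -
  have "(\<Sum>\<mu>\<in>partitions n. (b \<mu> - of_nat (num_types \<alpha> \<beta> \<mu>)) * Cser \<mu> \<nu>) = 0" for \<nu>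
    using fun_cong[OF b, of \<nu>] fun_cong[OF kron_Cser, of \<nu>]
    by (simp add: left_diff_distrib sum_subtractf)
  from Cser_linear_independent[OF this \<mu>] show ?thesis by simp
qed

end

theorem mainTheorem10:
  fixes \<alpha> \<beta> :: "nat multiset" and n :: nat
  assumes "\<alpha> \<in> partitions n" and "\<beta> \<in> partitions n"
  shows "(\<forall>\<mu> \<in> partitions n. \<forall>(U :: 'a set) (V :: 'b set) h.
            finite U \<longrightarrow> bij_betw h U V \<longrightarrow>
            Cmu \<alpha> \<beta> \<mu> U \<subseteq> Cspec \<alpha> U \<times> Cspec \<beta> U \<and>
            (\<forall>(s, t) \<in> Cmu \<alpha> \<beta> \<mu> U. (act n h s, act n h t) \<in> Cmu \<alpha> \<beta> \<mu> V))
       \<and> kron (Cser \<alpha>) (Cser \<beta>)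
           = (\<lambda>\<nu>. \<Sum>\<mu>\<in>partitions n. of_nat (num_types \<alpha> \<beta> \<mu>) * Cser \<mu> \<nu>)
       \<and> (\<forall>b :: nat multiset \<Rightarrow> rat.
            kron (Cser \<alpha>) (Cser \<beta>) = (\<lambda>\<nu>. \<Sum>\<mu>\<in>partitions n. b \<mu> * Cser \<mu> \<nu>)
            \<longrightarrow> (\<forall>\<mu> \<in> partitions n. b \<mu> = of_nat (num_types \<alpha> \<beta> \<mu>)))"
  \<comment> \<open>transport along bijections does not need \<open>finite U\<close>\<close>
  using Cmu_subspecies[OF assms] kron_Cser[OF assms] kron_Cser_coefficients_unique[OF assms]
  by blast

end
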